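(* Let $\mathcal{H}$ be a complex Hilbert space. The map $T\mapsto T'=T(T^*T)^{-1}$ (Cauchy dual) is a bijection from the set of all $\Delta_T$-regular concave operators $T\in\mathcal{B}(\mathcal{H})$ onto the set of all left invertible operators $C\in\mathcal{B}(\mathcal{H})$ which are $2$-hypercontractions, are $D_C^2$-regular, and satisfy $\|P_{\mathcal{D}_C}Ch\|\le\|C^*Ch\|$ for all $h\in\mathcal{D}_C$.
   Context: $\Delta_T=T^*T-I$. $T$ is concave if $T^{*2}T^2-2T^*T+I\le 0$; such $T$ is expansive, hence left invertible, so $T^*T$ is invertible and the Cauchy dual $T'=T(T^*T)^{-1}$ is defined. For a positive operator $A$, an operator $T$ is $A$-regular if $AT=A^{1/2}TA^{1/2}$. An operator $C$ is a $2$-hypercontraction if $I-C^*C\ge0$ and $I-2C^*C+C^{*2}C^2\ge 0$. For a contraction $C$, $D_C=(I-C^*C)^{1/2}$, $\mathcal{D}_C=\overline{\mathcal{R}(D_C)}$, and $D_C^2$-regularity means $D_C^2C=D_CCD_C$. $P_{\mathcal{M}}$ is the orthogonal projection onto $\mathcal{M}$. *)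

theory Defs
  imports "HOL-Analysis.Analysis"
begin

class chilbert_space = banach +
  fixes scaleC :: "complex \<Rightarrow> 'a \<Rightarrow> 'a"
    and cinner :: "'a \<Rightarrow> 'a \<Rightarrow> complex"
  assumes scaleC_add_right: "scaleC a (x + y) = scaleC a x + scaleC a y"
    and scaleC_add_left: "scaleC (a + b) x = scaleC a x + scaleC b x"
    and scaleC_scaleC: "scaleC a (scaleC b x) = scaleC (a * b) x"
    and scaleC_one: "scaleC 1 x = x"
    and scaleR_scaleC: "scaleR r x = scaleC (complex_of_real r) x"
    and cinner_add_left: "cinner (x + y) z = cinner x z + cinner y z"
    and cinner_scaleC_left: "cinner (scaleC a x) y = cnj a * cinner x y"
    and cinner_commute: "cinner x y = cnj (cinner y x)"
    and cinner_Re_nonneg: "0 \<le> Re (cinner x x)"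
    and cinner_eq_zero_iff: "cinner x x = 0 \<longleftrightarrow> x = 0"
    and norm_eq_sqrt_cinner: "norm x = sqrt (Re (cinner x x))"

definition bounded_clinear :: "('a::chilbert_space \<Rightarrow> 'b::chilbert_space) \<Rightarrow> bool" where
  "bounded_clinear T \<longleftrightarrow>
     (\<forall>x y. T (x + y) = T x + T y) \<and> (\<forall>a x. T (scaleC a x) = scaleC a (T x)) \<and>
     (\<exists>K. \<forall>x. norm (T x) \<le> norm x * K)"

definition adj :: "('a::chilbert_space \<Rightarrow> 'a) \<Rightarrow> ('a \<Rightarrow> 'a)" where
  "adj T = (THE S. \<forall>x y. cinner (T x) y = cinner x (S y))"

definition positive_op :: "('a::chilbert_space \<Rightarrow> 'a) \<Rightarrow> bool" where
  "positive_op A \<longleftrightarrow> (\<forall>x. Im (cinner (A x) x) = 0 \<and> 0 \<le> Re (cinner (A x) x))"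

definition op_le :: "('a::chilbert_space \<Rightarrow> 'a) \<Rightarrow> ('a \<Rightarrow> 'a) \<Rightarrow> bool" where
  "op_le A B \<longleftrightarrow> positive_op (\<lambda>x. B x - A x)"

definition op_sqrt :: "('a::chilbert_space \<Rightarrow> 'a) \<Rightarrow> ('a \<Rightarrow> 'a)" where
  "op_sqrt A = (THE B. bounded_clinear B \<and> positive_op B \<and> B \<circ> B = A)"

definition Delta :: "('a::chilbert_space \<Rightarrow> 'a) \<Rightarrow> ('a \<Rightarrow> 'a)" where
  "Delta T = (\<lambda>x. adj T (T x) - x)"

definition concave_op :: "('a::chilbert_space \<Rightarrow> 'a) \<Rightarrow> bool" where
  "concave_op T \<longleftrightarrow>
     op_le (\<lambda>x. adj T (adj T (T (T x))) - 2 *\<^sub>R adj T (T x) + x) (\<lambda>x. 0)"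

definition cauchy_dual :: "('a::chilbert_space \<Rightarrow> 'a) \<Rightarrow> ('a \<Rightarrow> 'a)" where
  "cauchy_dual T = T \<circ> inv (adj T \<circ> T)"

definition regular_op :: "('a::chilbert_space \<Rightarrow> 'a) \<Rightarrow> ('a \<Rightarrow> 'a) \<Rightarrow> bool" where
  "regular_op A T \<longleftrightarrow> A \<circ> T = op_sqrt A \<circ> T \<circ> op_sqrt A"

definition left_invertible :: "('a::chilbert_space \<Rightarrow> 'a) \<Rightarrow> bool" where
  "left_invertible C \<longleftrightarrow> (\<exists>S. bounded_clinear S \<and> S \<circ> C = id)"

definition hypercontraction2 :: "('a::chilbert_space \<Rightarrow> 'a) \<Rightarrow> bool" where
  "hypercontraction2 C \<longleftrightarrow>
     positive_op (\<lambda>x. x - adj C (C x)) \<and>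
     positive_op (\<lambda>x. x - 2 *\<^sub>R adj C (C x) + adj C (adj C (C (C x))))"

definition defect_op :: "('a::chilbert_space \<Rightarrow> 'a) \<Rightarrow> ('a \<Rightarrow> 'a)" where
  "defect_op C = op_sqrt (\<lambda>x. x - adj C (C x))"

definition orth_proj :: "'a::chilbert_space set \<Rightarrow> 'a \<Rightarrow> 'a" where
  "orth_proj M x = (THE y. y \<in> M \<and> (\<forall>z\<in>M. cinner (x - y) z = 0))"

end

theory Submission
  imports Defs
begin

text \<open>
  The Cauchy dual is an involution on left invertible operators: with \<open>A = T\<^sup>*T\<close> one has
  \<open>T'\<^sup>*T' = A\<^sup>-\<^sup>1\<close>, hence \<open>T'' = T\<close>. Writing \<open>\<Delta> = A - I\<close>, the defect \<open>I - T'\<^sup>*T'\<close> equals \<open>A\<^sup>-\<^sup>1\<Delta>\<close>;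
  since \<open>A\<close> commutes with \<open>\<Delta>\<close>, the operators \<open>T\<close> and \<open>T'\<close> have the same defect space
  \<open>M = (ker \<Delta>)\<^sup>\<bottom>\<close>, and \<open>\<Delta>\<close>-regularity of \<open>T\<close> is \<open>D\<^sup>2\<close>-regularity of \<open>T'\<close>.

  For a positive \<open>Y\<close> and a \<open>Y\<close>-regular \<open>Z\<close> one has \<open>Y\<^sup>1\<^sup>/\<^sup>2 Z x = P Z Y\<^sup>1\<^sup>/\<^sup>2 x\<close>, \<open>P\<close> the projection onto
  \<open>(ker Y)\<^sup>\<bottom>\<close>; so \<open>\<parallel>Y\<^sup>1\<^sup>/\<^sup>2 Z x\<parallel> \<le> \<parallel>Y\<^sup>1\<^sup>/\<^sup>2 x\<parallel>\<close> for all \<open>x\<close> iff the compression \<open>P Z\<close> is contractive on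
  \<open>(ker Y)\<^sup>\<bottom>\<close>. For \<open>Y = \<Delta>\<close> the inequality is concavity of \<open>T\<close>, for \<open>Y = D\<^sup>2\<close> it is
  2-hypercontractivity of \<open>T'\<close>, and the substitution \<open>h = A v\<close> turns \<open>\<parallel>P T v\<parallel> \<le> \<parallel>v\<parallel>\<close> on \<open>M\<close>
  into \<open>\<parallel>P T' h\<parallel> \<le> \<parallel>T'\<^sup>*T' h\<parallel>\<close>.
\<close>

section \<open>Inner product algebra\<close>

lemma scaleC_zero_left [simp]: "scaleC 0 (x::'a::chilbert_space) = 0"
  using scaleR_scaleC[of 0 x] by simp

lemma scaleC_minus_one: "scaleC (-1) (x::'a::chilbert_space) = - x"
  using scaleR_scaleC[of "-1" x] by simp

lemma cinner_add_right: "cinner (x::'a::chilbert_space) (y + z) = cinner x y + cinner x z"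
  by (subst (1 2 3) cinner_commute) (simp add: cinner_add_left)

lemma cinner_scaleC_right: "cinner (x::'a::chilbert_space) (scaleC a y) = a * cinner x y"
  by (subst (1 2) cinner_commute) (simp add: cinner_scaleC_left)

lemma scaleC_zero_right [simp]: "scaleC a (0::'a::chilbert_space) = 0"
  using scaleC_add_right[of a 0 0] by simp

lemma cinner_zero_left [simp]: "cinner 0 (y::'a::chilbert_space) = 0"
  using cinner_add_left[of 0 0 y] by simp

lemma cinner_zero_right [simp]: "cinner (x::'a::chilbert_space) 0 = 0"
  using cinner_add_right[of x 0 0] by simp

lemma cinner_minus_left: "cinner (- (x::'a::chilbert_space)) y = - cinner x y"
  using cinner_add_left[of x "-x" y] by (simp add: eq_neg_iff_add_eq_0 add.commute)

lemma cinner_minus_right: "cinner (x::'a::chilbert_space) (- y) = - cinner x y"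
  using cinner_add_right[of x y "-y"] by (simp add: eq_neg_iff_add_eq_0 add.commute)

lemma cinner_diff_left: "cinner ((x::'a::chilbert_space) - y) z = cinner x z - cinner y z"
  using cinner_add_left[of x "-y" z] by (simp add: cinner_minus_left)

lemma cinner_diff_right: "cinner (x::'a::chilbert_space) (y - z) = cinner x y - cinner x z"
  using cinner_add_right[of x y "-z"] by (simp add: cinner_minus_right)

lemma cinner_scaleR_left: "cinner (r *\<^sub>R (x::'a::chilbert_space)) y = complex_of_real r * cinner x y"
  by (simp add: scaleR_scaleC cinner_scaleC_left)

lemma cinner_scaleR_right: "cinner (x::'a::chilbert_space) (r *\<^sub>R y) = complex_of_real r * cinner x y"
  by (simp add: scaleR_scaleC cinner_scaleC_right)

lemma cinner_sum_left: "cinner (sum f A) (y::'a::chilbert_space) = (\<Sum>i\<in>A. cinner (f i) y)"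
  by (induction A rule: infinite_finite_induct) (auto simp: cinner_add_left)

lemma cinner_sum_right: "cinner (y::'a::chilbert_space) (sum f A) = (\<Sum>i\<in>A. cinner y (f i))"
  by (induction A rule: infinite_finite_induct) (auto simp: cinner_add_right)

lemma Im_cinner_self [simp]: "Im (cinner (x::'a::chilbert_space) x) = 0"
  using arg_cong[OF cinner_commute[of x x], of Im] by simp

lemma cinner_self: "cinner (x::'a::chilbert_space) x = complex_of_real ((norm x)\<^sup>2)"
  using norm_eq_sqrt_cinner[of x] cinner_Re_nonneg[of x] by (simp add: complex_eq_iff)

lemma Re_cinner_self: "Re (cinner (x::'a::chilbert_space) x) = (norm x)\<^sup>2"
  by (simp add: cinner_self)

lemma norm_scaleC: "norm (scaleC a (x::'a::chilbert_space)) = cmod a * norm x"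
proof -
  have "(norm (scaleC a x))\<^sup>2 = Re (cinner (scaleC a x) (scaleC a x))"
    by (rule Re_cinner_self[symmetric])
  also have "\<dots> = Re (cnj a * a * complex_of_real ((norm x)\<^sup>2))"
    by (simp only: cinner_scaleC_left cinner_scaleC_right cinner_self[of x] mult.assoc mult.left_commute)
  also have "\<dots> = (cmod a)\<^sup>2 * (norm x)\<^sup>2"
    by (simp only: complex_norm_square[symmetric] mult.commute[of "cnj a" a] of_real_mult[symmetric]
        Re_complex_of_real)
  finally have "(norm (scaleC a x))\<^sup>2 = (cmod a * norm x)\<^sup>2" by (simp add: power_mult_distrib)
  then show ?thesis by (simp add: power2_eq_iff_nonneg)
qed

lemma power2_norm_add:
  "(norm ((x::'a::chilbert_space) + y))\<^sup>2 = (norm x)\<^sup>2 + 2 * Re (cinner x y) + (norm y)\<^sup>2"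
proof -
  have "Re (cinner y x) = Re (cinner x y)" by (metis cinner_commute complex_cnj_cnj cnj.sel(1))
  then show ?thesis by (simp add: Re_cinner_self[symmetric] cinner_add_left cinner_add_right)
qed

lemma power2_norm_diff:
  "(norm ((x::'a::chilbert_space) - y))\<^sup>2 = (norm x)\<^sup>2 - 2 * Re (cinner x y) + (norm y)\<^sup>2"
  using power2_norm_add[of x "-y"] by (simp add: cinner_minus_right)

lemma parallelogram_law:
  "(norm ((a::'a::chilbert_space) - b))\<^sup>2 + (norm (a + b))\<^sup>2 = 2 * (norm a)\<^sup>2 + 2 * (norm b)\<^sup>2"
  by (simp add: power2_norm_add power2_norm_diff)

lemma Re_cinner_le_norm: "Re (cinner (x::'a::chilbert_space) y) \<le> norm x * norm y"
proof -
  have "(norm (x + y))\<^sup>2 \<le> (norm x + norm y)\<^sup>2" by (simp add: norm_triangle_ineq power_mono)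
  then show ?thesis by (simp add: power2_norm_add power2_sum)
qed

text \<open>Rotating \<open>y\<close> by a unit scalar makes the inner product real and nonnegative.\<close>

lemma cmod_cinner_le_norm: "cmod (cinner (x::'a::chilbert_space) y) \<le> norm x * norm y"
proof (cases "cinner x y = 0")
  case False
  define u where "u = cnj (cinner x y) / complex_of_real (cmod (cinner x y))"
  have "cnj (cinner x y) * cinner x y = complex_of_real ((cmod (cinner x y))\<^sup>2)"
    by (metis complex_norm_square mult.commute)
  then have "cinner x (scaleC u y) = complex_of_real (cmod (cinner x y))"
    using False by (simp add: cinner_scaleC_right u_def power2_eq_square)
  then have "cmod (cinner x y) = Re (cinner x (scaleC u y))" by simp
  also have "\<dots> \<le> norm x * norm (scaleC u y)" by (rule Re_cinner_le_norm)
  also have "\<dots> = norm x * norm y" using False by (simp add: norm_scaleC u_def norm_divide)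
  finally show ?thesis .
qed simp

lemma bounded_bilinear_cinner: "bounded_bilinear (cinner :: 'a::chilbert_space \<Rightarrow> 'a \<Rightarrow> complex)"
proof
  show "\<exists>K. \<forall>x y :: 'a. norm (cinner x y) \<le> norm x * norm y * K"
    by (intro exI[of _ 1] allI) (simp add: cmod_cinner_le_norm)
qed (simp_all add: cinner_add_left cinner_add_right cinner_scaleR_left cinner_scaleR_right
    scaleR_conv_of_real)

lemma cinner_ext: "(\<And>z. cinner z (x::'a::chilbert_space) = cinner z y) \<Longrightarrow> x = y"
  using cinner_eq_zero_iff[of "x - y"] by (simp add: cinner_diff_right)

lemma tendsto_cinner [tendsto_intros]:
  "(f \<longlongrightarrow> a) F \<Longrightarrow> (g \<longlongrightarrow> b) F \<Longrightarrow> ((\<lambda>n. cinner (f n) (g n)) \<longlongrightarrow> cinner a b) F"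
  by (rule bounded_bilinear.tendsto[OF bounded_bilinear_cinner])

lemma continuous_on_cinner [continuous_intros]:
  "continuous_on S f \<Longrightarrow> continuous_on S g \<Longrightarrow> continuous_on S (\<lambda>x. cinner (f x) (g x))"
  by (rule bounded_bilinear.continuous_on[OF bounded_bilinear_cinner])

lemma bounded_linear_scaleC: "bounded_linear (\<lambda>x::'a::chilbert_space. scaleC a x)"
  by (rule bounded_linear_intro[of _ "cmod a"])
     (auto simp: scaleC_add_right scaleR_scaleC scaleC_scaleC mult.commute norm_scaleC)

section \<open>Bounded operators\<close>

lemma bounded_clinearI:
  assumes "\<And>x y. T (x + y) = T x + T y" "\<And>a x. T (scaleC a x) = scaleC a (T x)"
    and "\<And>x. norm (T x) \<le> norm x * K"
  shows "bounded_clinear T"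
  using assms unfolding bounded_clinear_def by blast

lemma clinear_add: "bounded_clinear T \<Longrightarrow> T (x + y) = T x + T y"
  by (simp add: bounded_clinear_def)

lemma clinear_scaleC: "bounded_clinear T \<Longrightarrow> T (scaleC a x) = scaleC a (T x)"
  by (simp add: bounded_clinear_def)

lemma bounded_clinear_imp_bounded_linear: "bounded_clinear T \<Longrightarrow> bounded_linear T"
  unfolding bounded_clinear_def by (metis bounded_linear_intro scaleR_scaleC)

lemma bounded_clinear_pos_bound: "bounded_clinear T \<Longrightarrow> \<exists>K>0. \<forall>x. norm (T x) \<le> norm x * K"
  using bounded_clinear_imp_bounded_linear bounded_linear.pos_bounded by blast

lemma clinear_zero [simp]: "bounded_clinear T \<Longrightarrow> T 0 = 0"
  using bounded_clinear_imp_bounded_linear bounded_linear.linear linear_0 by blast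

lemma clinear_diff: "bounded_clinear T \<Longrightarrow> T (x - y) = T x - T y"
  using bounded_clinear_imp_bounded_linear bounded_linear.linear linear_diff by blast

lemma clinear_scaleR: "bounded_clinear T \<Longrightarrow> T (r *\<^sub>R x) = r *\<^sub>R T x"
  using bounded_clinear_imp_bounded_linear bounded_linear.linear linear_scale by blast

lemma clinear_sum: "bounded_clinear T \<Longrightarrow> T (sum f A) = (\<Sum>i\<in>A. T (f i))"
  using bounded_clinear_imp_bounded_linear bounded_linear.linear linear_sum by blast

lemma bounded_clinear_tendsto:
  "bounded_clinear T \<Longrightarrow> (f \<longlongrightarrow> a) F \<Longrightarrow> ((\<lambda>n. T (f n)) \<longlongrightarrow> T a) F"
  using bounded_clinear_imp_bounded_linear bounded_linear.tendsto by blast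

lemma bounded_clinear_continuous_on: "bounded_clinear T \<Longrightarrow> continuous_on S T"
  using bounded_clinear_imp_bounded_linear linear_continuous_on by blast

lemma bounded_clinear_ident: "bounded_clinear (\<lambda>x. x)"
  by (rule bounded_clinearI[where K=1]) auto

lemma bounded_clinear_zero: "bounded_clinear (\<lambda>x. 0)"
  by (rule bounded_clinearI[where K=0]) auto

lemma bounded_clinear_compose:
  assumes S: "bounded_clinear S" and T: "bounded_clinear T"
  shows "bounded_clinear (\<lambda>x. S (T x))"
proof -
  obtain K1 where K1: "\<And>x. norm (S x) \<le> norm x * K1" "K1 > 0"
    using bounded_clinear_pos_bound[OF S] by blast
  obtain K2 where K2: "\<And>x. norm (T x) \<le> norm x * K2"
    using bounded_clinear_pos_bound[OF T] by blast
  show ?thesis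
  proof (rule bounded_clinearI[where K="K2 * K1"])
    fix x
    have "norm (S (T x)) \<le> norm (T x) * K1" by (rule K1)
    also have "\<dots> \<le> norm x * K2 * K1" using K2 K1(2) by (simp add: mult_right_mono)
    finally show "norm (S (T x)) \<le> norm x * (K2 * K1)" by (simp add: mult.assoc)
  qed (simp_all add: clinear_add[OF S] clinear_add[OF T] clinear_scaleC[OF S] clinear_scaleC[OF T])
qed

lemma bounded_clinear_add:
  assumes S: "bounded_clinear S" and T: "bounded_clinear T"
  shows "bounded_clinear (\<lambda>x. S x + T x)"
proof -
  obtain K1 where K1: "\<And>x. norm (S x) \<le> norm x * K1" using bounded_clinear_pos_bound[OF S] by blast
  obtain K2 where K2: "\<And>x. norm (T x) \<le> norm x * K2" using bounded_clinear_pos_bound[OF T] by blast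
  show ?thesis
  proof (rule bounded_clinearI[where K="K1 + K2"])
    fix x
    have "norm (S x + T x) \<le> norm x * K1 + norm x * K2"
      using norm_triangle_ineq[of "S x" "T x"] K1[of x] K2[of x] by linarith
    then show "norm (S x + T x) \<le> norm x * (K1 + K2)" by (simp add: distrib_left)
  qed (simp_all add: clinear_add[OF S] clinear_add[OF T] clinear_scaleC[OF S] clinear_scaleC[OF T]
      scaleC_add_right)
qed

lemma bounded_clinear_scaleR:
  assumes T: "bounded_clinear T"
  shows "bounded_clinear (\<lambda>x. r *\<^sub>R T x)"
proof -
  obtain K where K: "\<And>x. norm (T x) \<le> norm x * K" using bounded_clinear_pos_bound[OF T] by blast
  show ?thesis
  proof (rule bounded_clinearI[where K="\<bar>r\<bar> * K"])
    fix x
    show "norm (r *\<^sub>R T x) \<le> norm x * (\<bar>r\<bar> * K)"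
      using K[of x] by (simp add: mult_left_mono mult.left_commute)
  next
    fix a x
    show "r *\<^sub>R T (scaleC a x) = scaleC a (r *\<^sub>R T x)"
      by (simp add: clinear_scaleC[OF T] scaleR_scaleC scaleC_scaleC mult.commute)
  qed (simp_all add: clinear_add[OF T] scaleR_add_right)
qed

lemma bounded_clinear_diff:
  "bounded_clinear S \<Longrightarrow> bounded_clinear T \<Longrightarrow> bounded_clinear (\<lambda>x. S x - T x)"
  using bounded_clinear_add[OF _ bounded_clinear_scaleR[of T "-1"]] by simp

lemma bounded_clinear_funpow:
  fixes T :: "'a::chilbert_space \<Rightarrow> 'a"
  assumes "bounded_clinear T"
  shows "bounded_clinear (T ^^ n)"
proof (induction n)
  case 0
  then show ?case using bounded_clinear_ident by (simp add: id_def)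
next
  case (Suc n)
  then show ?case using bounded_clinear_compose[OF assms Suc] by (simp add: comp_def)
qed

lemma bounded_clinear_sum:
  "(\<And>i. i \<in> A \<Longrightarrow> bounded_clinear (F i)) \<Longrightarrow> bounded_clinear (\<lambda>x. \<Sum>i\<in>A. F i x)"
  by (induction A rule: infinite_finite_induct) (auto simp: bounded_clinear_zero bounded_clinear_add)

lemma bounded_clinear_strong_limit:
  fixes F :: "nat \<Rightarrow> 'a::chilbert_space \<Rightarrow> 'a"
  assumes bounded: "\<And>N. bounded_clinear (F N)" and bound: "\<And>N x. norm (F N x) \<le> K * norm x"
    and lim: "\<And>x. (\<lambda>N. F N x) \<longlonglongrightarrow> G x"
  shows "bounded_clinear G" and "norm (G x) \<le> K * norm x"
proof -
  have G_bound: "norm (G x) \<le> K * norm x" for x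
    using tendsto_norm[OF lim[of x]]
    by (rule tendsto_le[OF trivial_limit_sequentially tendsto_const]) (simp add: bound)
  then show "norm (G x) \<le> K * norm x" .
  show "bounded_clinear G"
  proof (rule bounded_clinearI[where K=K])
    fix x y
    have "(\<lambda>N. F N (x + y)) \<longlonglongrightarrow> G x + G y"
      unfolding clinear_add[OF bounded] by (intro tendsto_intros lim)
    then show "G (x + y) = G x + G y" using lim[of "x + y"] LIMSEQ_unique by blast
  next
    fix a x
    have "(\<lambda>N. F N (scaleC a x)) \<longlonglongrightarrow> scaleC a (G x)"
      unfolding clinear_scaleC[OF bounded] by (rule bounded_linear.tendsto[OF bounded_linear_scaleC lim])
    then show "G (scaleC a x) = scaleC a (G x)" using lim[of "scaleC a x"] LIMSEQ_unique by blast
  qed (simp add: G_bound mult.commute)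
qed

section \<open>Closed subspaces and orthogonal projections\<close>

definition csubspace :: "'a::chilbert_space set \<Rightarrow> bool" where
  "csubspace M \<longleftrightarrow> 0 \<in> M \<and> (\<forall>x\<in>M. \<forall>y\<in>M. x + y \<in> M) \<and> (\<forall>a. \<forall>x\<in>M. scaleC a x \<in> M)"

lemma csubspace_diff: "csubspace M \<Longrightarrow> x \<in> M \<Longrightarrow> y \<in> M \<Longrightarrow> x - y \<in> M"
  unfolding csubspace_def by (metis diff_conv_add_uminus scaleC_minus_one)

lemma csubspace_scaleR: "csubspace M \<Longrightarrow> x \<in> M \<Longrightarrow> r *\<^sub>R x \<in> M"
  unfolding csubspace_def by (simp add: scaleR_scaleC)

lemma csubspace_range: "bounded_clinear G \<Longrightarrow> csubspace (range G)"
  unfolding csubspace_def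
  by (auto simp: image_iff clinear_add[symmetric] clinear_scaleC[symmetric] intro: exI[of _ 0])

lemma csubspace_closure:
  fixes M :: "'a::chilbert_space set"
  assumes M: "csubspace M"
  shows "csubspace (closure M)"
  unfolding csubspace_def
proof (intro conjI ballI allI)
  show "0 \<in> closure M" using M closure_subset by (auto simp: csubspace_def)
next
  fix x y assume "x \<in> closure M" "y \<in> closure M"
  then obtain f g where f: "\<forall>n. f n \<in> M" "f \<longlonglongrightarrow> x" and g: "\<forall>n. g n \<in> M" "g \<longlonglongrightarrow> y"
    unfolding closure_sequential by blast
  have "\<forall>n. f n + g n \<in> M" using f g M by (simp add: csubspace_def)
  moreover have "(\<lambda>n. f n + g n) \<longlonglongrightarrow> x + y" using f g by (intro tendsto_intros)
  ultimately show "x + y \<in> closure M" unfolding closure_sequential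
    by (intro exI[where x="\<lambda>n. f n + g n"] conjI)
next
  fix a x assume "x \<in> closure M"
  then obtain f where f: "\<forall>n. f n \<in> M" "f \<longlonglongrightarrow> x" unfolding closure_sequential by blast
  have "\<forall>n. scaleC a (f n) \<in> M" using f M by (simp add: csubspace_def)
  moreover have "(\<lambda>n. scaleC a (f n)) \<longlonglongrightarrow> scaleC a x"
    by (rule bounded_linear.tendsto[OF bounded_linear_scaleC f(2)])
  ultimately show "scaleC a x \<in> closure M" unfolding closure_sequential
    by (intro exI[where x="\<lambda>n. scaleC a (f n)"] conjI)
qed

text \<open>Two points of \<open>M\<close> that almost realise the distance \<open>d\<close> from \<open>x\<close> to \<open>M\<close> are close to each
  other: apply the parallelogram law to \<open>x - p\<close> and \<open>x - q\<close>, whose mean lies at distance at least \<open>d\<close>.\<close>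

lemma near_points_close:
  fixes x p q :: "'a::chilbert_space"
  assumes M: "csubspace M" "p \<in> M" "q \<in> M" and dist_ge: "\<forall>m\<in>M. d \<le> norm (x - m)" "0 \<le> d"
    and "norm (x - p) \<le> d + e" "norm (x - q) \<le> d + e'"
  shows "(norm (p - q))\<^sup>2 \<le> 2 * (d + e)\<^sup>2 + 2 * (d + e')\<^sup>2 - 4 * d\<^sup>2"
proof -
  have "(1/2::real) *\<^sub>R (p + q) \<in> M"
    using M by (simp add: csubspace_def csubspace_scaleR)
  then have "d \<le> norm (x - (1/2::real) *\<^sub>R (p + q))" using dist_ge by blast
  then have "4 * d\<^sup>2 \<le> (norm (2 *\<^sub>R (x - (1/2::real) *\<^sub>R (p + q))))\<^sup>2"
    using dist_ge(2) by (simp add: power_mult_distrib power_mono)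
  also have "2 *\<^sub>R (x - (1/2::real) *\<^sub>R (p + q)) = (x - p) + (x - q)"
    by (simp add: algebra_simps scaleR_2)
  finally have "4 * d\<^sup>2 \<le> (norm ((x - p) + (x - q)))\<^sup>2" .
  moreover have "(norm (x - p))\<^sup>2 \<le> (d + e)\<^sup>2" "(norm (x - q))\<^sup>2 \<le> (d + e')\<^sup>2"
    using assms(6,7) by (simp_all add: power_mono)
  moreover have "(x - p) - (x - q) = q - p" by simp
  ultimately show ?thesis
    using parallelogram_law[of "x - p" "x - q"] by (simp add: norm_minus_commute)
qed

lemma Cauchy_if_power2_dist_le:
  fixes m :: "nat \<Rightarrow> 'a::metric_space"
  assumes close: "\<And>p q. (dist (m p) (m q))\<^sup>2 \<le> C * (1 / real (Suc p) + 1 / real (Suc q))"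
    and "C \<ge> 0"
  shows "Cauchy m"
proof (intro metric_CauchyI)
  fix \<epsilon> :: real assume "\<epsilon> > 0"
  then obtain N where N: "1 / real (Suc N) < \<epsilon>\<^sup>2 / (2 * C + 1)"
    using \<open>C \<ge> 0\<close> nat_approx_posE[of "\<epsilon>\<^sup>2 / (2 * C + 1)"] by auto
  have "dist (m p) (m q) < \<epsilon>" if "p \<ge> N" "q \<ge> N" for p q
  proof -
    have "1 / real (Suc p) \<le> 1 / real (Suc N)" "1 / real (Suc q) \<le> 1 / real (Suc N)"
      using that by (simp_all add: frac_le)
    then have "1 / real (Suc p) + 1 / real (Suc q) \<le> 2 * (1 / real (Suc N))" by simp
    then have "(dist (m p) (m q))\<^sup>2 \<le> C * (2 * (1 / real (Suc N)))"
      using order_trans[OF close mult_left_mono] \<open>C \<ge> 0\<close> by blast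
    also have "\<dots> \<le> (2 * C + 1) * (1 / real (Suc N))" by (simp add: field_simps)
    also have "\<dots> < \<epsilon>\<^sup>2" using N \<open>C \<ge> 0\<close> by (simp add: field_simps)
    finally show ?thesis using \<open>\<epsilon> > 0\<close> by (simp add: power_less_imp_less_base)
  qed
  then show "\<exists>N. \<forall>p\<ge>N. \<forall>q\<ge>N. dist (m p) (m q) < \<epsilon>" by blast
qed

lemma nearest_point_exists:
  fixes x :: "'a::chilbert_space"
  assumes M: "csubspace M" "closed M"
  shows "\<exists>y\<in>M. \<forall>m\<in>M. norm (x - y) \<le> norm (x - m)"
proof -
  define d where "d = Inf ((\<lambda>m. norm (x - m)) ` M)"
  have d_le: "\<forall>m\<in>M. d \<le> norm (x - m)"
    unfolding d_def by (intro ballI cINF_lower bdd_belowI2[where m=0]) auto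
  have d_nonneg: "0 \<le> d" unfolding d_def using M(1)
    by (intro cInf_greatest) (auto simp: csubspace_def)
  define e where "e = (\<lambda>n::nat. 1 / real (Suc n))"
  have "\<exists>m\<in>M. norm (x - m) < d + e n" for n
    using cInf_lessD[of "(\<lambda>m. norm (x - m)) ` M" "d + e n"] M(1)
    by (auto simp: d_def e_def csubspace_def)
  then obtain m where m: "\<And>n. m n \<in> M" "\<And>n. norm (x - m n) < d + e n" by metis
  have close: "(dist (m p) (m q))\<^sup>2 \<le> (4 * d + 2) * (e p + e q)" for p q
  proof -
    have "(dist (m p) (m q))\<^sup>2 \<le> 2 * (d + e p)\<^sup>2 + 2 * (d + e q)\<^sup>2 - 4 * d\<^sup>2"
      unfolding dist_norm using m(1) d_le d_nonneg less_imp_le[OF m(2)]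
      by (intro near_points_close[OF M(1)])
    also have "\<dots> = (4 * d + 2 * e p) * e p + (4 * d + 2 * e q) * e q"
      by (simp add: power2_eq_square algebra_simps)
    also have "\<dots> \<le> (4 * d + 2) * e p + (4 * d + 2) * e q"
      using d_nonneg by (intro add_mono mult_right_mono) (auto simp: e_def field_simps)
    finally show ?thesis by (simp add: distrib_left)
  qed
  have "Cauchy m"
    by (rule Cauchy_if_power2_dist_le[where C="4 * d + 2"]) (use close d_nonneg in \<open>simp_all add: e_def\<close>)
  then obtain y where y: "m \<longlonglongrightarrow> y" using Cauchy_convergent_iff convergent_def by blast
  have "y \<in> M" using M(2) m(1) y closed_sequentially by blast
  moreover have "norm (x - y) \<le> d"
  proof (rule LIMSEQ_le[where X="\<lambda>n. norm (x - m n)" and Y="\<lambda>n. d + e n"])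
    show "(\<lambda>n. norm (x - m n)) \<longlonglongrightarrow> norm (x - y)" by (intro tendsto_intros y)
    show "(\<lambda>n. d + e n) \<longlonglongrightarrow> d"
      using tendsto_add[OF tendsto_const LIMSEQ_Suc[OF lim_inverse_n']] by (simp add: e_def)
  qed (use m(2) less_imp_le in auto)
  ultimately show ?thesis using d_le by force
qed

lemma nearest_point_orthogonal:
  fixes x y :: "'a::chilbert_space"
  assumes M: "csubspace M" and y: "y \<in> M" and nearest: "\<forall>m\<in>M. norm (x - y) \<le> norm (x - m)"
    and z: "z \<in> M"
  shows "cinner (x - y) z = 0"
proof -
  define w where "w = x - y"
  define a where "a = cinner z w"
  have ineq: "2 * r * (cmod a)\<^sup>2 \<le> r\<^sup>2 * (cmod a)\<^sup>2 * (norm z)\<^sup>2" if "r > 0" for r :: real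
  proof -
    define t where "t = complex_of_real r * a"
    have "y + scaleC t z \<in> M" using M y z by (simp add: csubspace_def)
    then have "(norm w)\<^sup>2 \<le> (norm (w - scaleC t z))\<^sup>2"
      using nearest by (simp add: w_def algebra_simps power_mono)
    also have "\<dots> = (norm w)\<^sup>2 - 2 * Re (cinner w (scaleC t z)) + (norm (scaleC t z))\<^sup>2"
      by (rule power2_norm_diff)
    also have "cinner w (scaleC t z) = t * cnj a"
      by (simp add: cinner_scaleC_right a_def cinner_commute[of z w])
    also have "Re (t * cnj a) = r * (cmod a)\<^sup>2"
      by (simp add: t_def mult.assoc complex_norm_square[symmetric])
    also have "(norm (scaleC t z))\<^sup>2 = r\<^sup>2 * (cmod a)\<^sup>2 * (norm z)\<^sup>2"
      using that by (simp add: norm_scaleC t_def norm_mult power_mult_distrib)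
    finally show ?thesis by simp
  qed
  have "cmod a = 0"
  proof (rule ccontr)
    assume "cmod a \<noteq> 0"
    define r where "r = 1 / ((norm z)\<^sup>2 + 1)"
    have r: "r > 0" "r * (norm z)\<^sup>2 < 1" by (simp_all add: r_def add_nonneg_pos)
    have "(r * (cmod a)\<^sup>2) * 2 \<le> (r * (cmod a)\<^sup>2) * (r * (norm z)\<^sup>2)"
      using ineq[OF r(1)] by (simp add: power2_eq_square mult_ac)
    then have "2 \<le> r * (norm z)\<^sup>2" using r(1) \<open>cmod a \<noteq> 0\<close> by simp
    with r(2) show False by simp
  qed
  then show ?thesis using a_def cinner_commute[of w z] by (simp add: w_def)
qed

lemma orth_proj_exists:
  fixes x :: "'a::chilbert_space"
  assumes "csubspace M" "closed M"
  shows "\<exists>y\<in>M. \<forall>z\<in>M. cinner (x - y) z = 0"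
  using nearest_point_exists[OF assms, of x] nearest_point_orthogonal[OF assms(1)] by blast

lemma orth_proj_unique:
  fixes x :: "'a::chilbert_space"
  assumes "csubspace M" "y1 \<in> M" "\<forall>z\<in>M. cinner (x - y1) z = 0" "y2 \<in> M" "\<forall>z\<in>M. cinner (x - y2) z = 0"
  shows "y1 = y2"
proof -
  have "y2 - y1 \<in> M" using assms csubspace_diff by blast
  then have "cinner (x - y1) (y2 - y1) - cinner (x - y2) (y2 - y1) = 0" using assms by simp
  then have "cinner (y2 - y1) (y2 - y1) = 0" by (simp add: cinner_diff_left[symmetric])
  then show ?thesis by (simp add: cinner_eq_zero_iff)
qed

lemma
  fixes x :: "'a::chilbert_space"
  assumes "csubspace M" "closed M"
  shows orth_proj_in: "orth_proj M x \<in> M"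
    and orth_proj_orthogonal: "\<forall>z\<in>M. cinner (x - orth_proj M x) z = 0"
proof -
  obtain y where y: "y \<in> M" "\<forall>z\<in>M. cinner (x - y) z = 0" using orth_proj_exists[OF assms] by blast
  have "orth_proj M x = y" unfolding orth_proj_def
    by (rule the_equality) (use y orth_proj_unique[OF assms(1)] in blast)+
  with y show "orth_proj M x \<in> M" "\<forall>z\<in>M. cinner (x - orth_proj M x) z = 0" by auto
qed

lemma orth_proj_eqI:
  fixes x :: "'a::chilbert_space"
  assumes "csubspace M" "closed M" "y \<in> M" "\<forall>z\<in>M. cinner (x - y) z = 0"
  shows "orth_proj M x = y"
  using orth_proj_unique[OF assms(1) orth_proj_in[OF assms(1,2)] orth_proj_orthogonal[OF assms(1,2)]
      assms(3,4)] by blast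

context
  fixes M :: "'a::chilbert_space set"
  assumes M: "csubspace M" "closed M"
begin

lemma orth_proj_id: "a \<in> M \<Longrightarrow> orth_proj M a = a"
  by (rule orth_proj_eqI[OF M]) auto

lemma orth_proj_eq_0: "\<forall>z\<in>M. cinner a z = 0 \<Longrightarrow> orth_proj M a = 0"
  by (rule orth_proj_eqI[OF M]) (use M in \<open>auto simp: csubspace_def\<close>)

lemma orth_proj_diff: "orth_proj M (a - b) = orth_proj M a - orth_proj M b"
proof (rule orth_proj_eqI[OF M])
  show "orth_proj M a - orth_proj M b \<in> M"
    using orth_proj_in[OF M] csubspace_diff[OF M(1)] by blast
  show "\<forall>z\<in>M. cinner (a - b - (orth_proj M a - orth_proj M b)) z = 0"
  proof
    fix z assume "z \<in> M"
    have "a - b - (orth_proj M a - orth_proj M b) = (a - orth_proj M a) - (b - orth_proj M b)" by simp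
    then show "cinner (a - b - (orth_proj M a - orth_proj M b)) z = 0"
      using orth_proj_orthogonal[OF M, of a] orth_proj_orthogonal[OF M, of b] \<open>z \<in> M\<close>
      by (simp add: cinner_diff_left)
  qed
qed

lemma orth_proj_scaleR: "orth_proj M (r *\<^sub>R a) = r *\<^sub>R orth_proj M a"
proof (rule orth_proj_eqI[OF M])
  show "r *\<^sub>R orth_proj M a \<in> M" using orth_proj_in[OF M] csubspace_scaleR[OF M(1)] by blast
  have "r *\<^sub>R a - r *\<^sub>R orth_proj M a = r *\<^sub>R (a - orth_proj M a)"
    by (rule scaleR_diff_right[symmetric])
  then show "\<forall>z\<in>M. cinner (r *\<^sub>R a - r *\<^sub>R orth_proj M a) z = 0"
    using orth_proj_orthogonal[OF M, of a] by (simp add: cinner_scaleR_left)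
qed

lemma norm_orth_proj_le: "norm (orth_proj M a) \<le> norm a"
proof -
  define p where "p = orth_proj M a"
  have "cinner (a - p) p = 0" using orth_proj_orthogonal[OF M] orth_proj_in[OF M] by (simp add: p_def)
  then have "(norm a)\<^sup>2 = (norm p)\<^sup>2 + (norm (a - p))\<^sup>2"
    using power2_norm_add[of p "a - p"] cinner_commute[of p "a - p"] by simp
  then have "(norm p)\<^sup>2 \<le> (norm a)\<^sup>2" by simp
  then show ?thesis unfolding p_def[symmetric] by (rule power2_le_imp_le) simp
qed

lemma continuous_on_orth_proj: "continuous_on S (orth_proj M)"
proof -
  have "orth_proj M (x + y) = orth_proj M x + orth_proj M y" for x y
  proof -
    have "orth_proj M 0 = 0" using orth_proj_id M(1) by (simp add: csubspace_def)
    moreover have "orth_proj M (x - (- y)) = orth_proj M x - orth_proj M (- y)"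
      "orth_proj M (0 - y) = orth_proj M 0 - orth_proj M y"
      by (rule orth_proj_diff)+
    ultimately show ?thesis by simp
  qed
  then have "bounded_linear (orth_proj M)"
    by (intro bounded_linear_intro[where K=1]) (simp_all add: orth_proj_scaleR norm_orth_proj_le)
  then show ?thesis by (rule linear_continuous_on)
qed

end

section \<open>Adjoints\<close>

lemma riesz_representation:
  fixes f :: "'a::chilbert_space \<Rightarrow> complex"
  assumes add: "\<And>x y. f (x + y) = f x + f y" and scale: "\<And>a x. f (scaleC a x) = a * f x"
    and bound: "\<And>x. cmod (f x) \<le> norm x * K"
  shows "\<exists>z. \<forall>x. f x = cinner z x"
proof (cases "\<forall>x. f x = 0")
  case True then show ?thesis by (intro exI[of _ 0]) simp
next
  case False
  then obtain u where u: "f u \<noteq> 0" by blast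
  have f0: "f 0 = 0" using scale[of 0 0] by simp
  have f_diff: "f (x - y) = f x - f y" for x y using add[of "x - y" y] by simp
  have "bounded_linear f"
    by (rule bounded_linear_intro[of _ K]) (auto simp: add scale scaleR_scaleC scaleR_conv_of_real bound)
  define N where "N = {x. f x = 0}"
  have N: "csubspace N" "closed N" unfolding N_def
    by (auto simp: csubspace_def add scale f0 intro!: closed_Collect_eq continuous_on_const
        linear_continuous_on \<open>bounded_linear f\<close>)
  define w where "w = u - orth_proj N u"
  have w_perp: "\<forall>z\<in>N. cinner w z = 0" using orth_proj_orthogonal[OF N] by (simp add: w_def)
  have fw: "f w = f u" using orth_proj_in[OF N] by (simp add: w_def f_diff N_def)
  then have ww: "cinner w w \<noteq> 0" using u f0 by (auto simp: cinner_eq_zero_iff)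
  show ?thesis
  proof (intro exI allI)
    fix x
    have "x - scaleC (f x / f w) w \<in> N" using fw u by (simp add: N_def f_diff scale)
    then have "cinner w (x - scaleC (f x / f w) w) = 0" using w_perp by blast
    then have "cinner w x = f x / f w * cinner w w" by (simp add: cinner_diff_right cinner_scaleC_right)
    then have "f x = f w * cinner w x / cinner w w" using ww fw u by (simp add: field_simps)
    also have "\<dots> = cinner (scaleC (cnj (f w / cinner w w)) w) x" by (simp add: cinner_scaleC_left)
    finally show "f x = cinner (scaleC (cnj (f w / cinner w w)) w) x" .
  qed
qed

lemma adj_eqI:
  assumes "\<And>x y. cinner (T x) y = cinner x (S y)"
  shows "adj T = S"
  unfolding adj_def
proof (rule the_equality)
  fix S' assume S': "\<forall>x y. cinner (T x) y = cinner x (S' y)"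
  show "S' = S"
  proof
    fix y show "S' y = S y"
    proof (rule cinner_ext)
      fix z show "cinner z (S' y) = cinner z (S y)" using S' assms[of z y] by simp
    qed
  qed
qed (use assms in blast)

lemma adj_exists:
  fixes T :: "'a::chilbert_space \<Rightarrow> 'a"
  assumes T: "bounded_clinear T"
  shows "\<exists>S. \<forall>x y. cinner (T x) y = cinner x (S y)"
proof -
  obtain K where K: "\<And>x. norm (T x) \<le> norm x * K" using bounded_clinear_pos_bound[OF T] by blast
  have "\<exists>z. \<forall>x. cinner y (T x) = cinner z x" for y
  proof (rule riesz_representation[where K="norm y * K"])
    fix x
    have "cmod (cinner y (T x)) \<le> norm y * (norm x * K)"
      using cmod_cinner_le_norm[of y "T x"] K[of x] by (meson mult_left_mono norm_ge_zero order_trans)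
    then show "cmod (cinner y (T x)) \<le> norm x * (norm y * K)" by (simp add: mult_ac)
  qed (simp_all add: clinear_add[OF T] clinear_scaleC[OF T] cinner_add_right cinner_scaleC_right)
  then obtain S where S: "\<And>y x. cinner y (T x) = cinner (S y) x" by metis
  have "cinner (T x) y = cinner x (S y)" for x y
    by (simp add: cinner_commute[of "T x" y] S cinner_commute[of "S y" x])
  then show ?thesis by blast
qed

lemma cinner_adj_right:
  assumes "bounded_clinear T"
  shows "cinner (T x) y = cinner x (adj T y)"
proof -
  obtain S where S: "\<forall>x y. cinner (T x) y = cinner x (S y)" using adj_exists[OF assms] by blast
  then have "adj T = S" by (intro adj_eqI) blast
  with S show ?thesis by simp
qed

lemma cinner_adj_left:
  assumes "bounded_clinear T"
  shows "cinner (adj T x) y = cinner x (T y)"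
proof -
  have "cinner (adj T x) y = cnj (cinner (T y) x)"
    by (simp add: cinner_commute[of "adj T x"] cinner_adj_right[OF assms])
  then show ?thesis by (simp add: cinner_commute[of x])
qed

lemma bounded_clinear_adj:
  fixes T :: "'a::chilbert_space \<Rightarrow> 'a"
  assumes T: "bounded_clinear T"
  shows "bounded_clinear (adj T)"
proof -
  obtain K where K: "\<And>x. norm (T x) \<le> norm x * K" "K > 0" using bounded_clinear_pos_bound[OF T] by blast
  note adj = cinner_adj_right[OF T, symmetric]
  show ?thesis
  proof (rule bounded_clinearI[where K=K])
    fix x y show "adj T (x + y) = adj T x + adj T y"
      by (rule cinner_ext) (simp add: adj cinner_add_right)
  next
    fix a x show "adj T (scaleC a x) = scaleC a (adj T x)"
      by (rule cinner_ext) (simp add: adj cinner_scaleC_right)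
  next
    fix y
    have "(norm (adj T y))\<^sup>2 = Re (cinner (adj T y) (adj T y))" by (simp add: Re_cinner_self)
    also have "\<dots> = Re (cinner (T (adj T y)) y)" by (simp only: adj)
    also have "\<dots> \<le> norm (adj T y) * K * norm y"
      using Re_cinner_le_norm[of "T (adj T y)" y] K(1)[of "adj T y"]
      by (meson mult_right_mono norm_ge_zero order_trans)
    finally have "norm (adj T y) * norm (adj T y) \<le> norm (adj T y) * (norm y * K)"
      by (simp add: power2_eq_square mult_ac)
    then show "norm (adj T y) \<le> norm y * K"
      using K(2) by (cases "norm (adj T y) = 0") (auto simp: mult_le_cancel_left)
  qed
qed

lemma norm_adj_le_contraction:
  fixes C :: "'a::chilbert_space \<Rightarrow> 'a"
  assumes C: "bounded_clinear C" and contr: "\<And>x. norm (C x) \<le> norm x"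
  shows "norm (adj C w) \<le> norm w"
proof -
  have "(norm (adj C w))\<^sup>2 = Re (cinner (adj C w) (adj C w))" by (simp add: Re_cinner_self)
  also have "\<dots> = Re (cinner w (C (adj C w)))" by (simp only: cinner_adj_left[OF C])
  also have "\<dots> \<le> norm w * norm (adj C w)"
    using Re_cinner_le_norm[of w "C (adj C w)"] contr[of "adj C w"]
    by (meson mult_left_mono norm_ge_zero order_trans)
  finally have "norm (adj C w) * norm (adj C w) \<le> norm w * norm (adj C w)"
    by (simp add: power2_eq_square)
  then show ?thesis by (cases "norm (adj C w) = 0") (auto simp: mult_le_cancel_right)
qed

section \<open>Self-adjoint and positive operators\<close>

definition selfadj :: "('a::chilbert_space \<Rightarrow> 'a) \<Rightarrow> bool" where
  "selfadj A \<longleftrightarrow> (\<forall>x y. cinner (A x) y = cinner x (A y))"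

lemma Im_cinner_selfadj:
  assumes "selfadj A"
  shows "Im (cinner (A x) x) = 0"
proof -
  have "cinner (A x) x = cnj (cinner (A x) x)"
    using assms cinner_commute[of x "A x"] by (simp add: selfadj_def)
  then show ?thesis by (metis cnj.sel(2) complex.expand neg_equal_zero)
qed

lemma selfadjI_Im_cinner:
  fixes A :: "'a::chilbert_space \<Rightarrow> 'a"
  assumes A: "bounded_clinear A" and real: "\<And>x. Im (cinner (A x) x) = 0"
  shows "selfadj A"
  unfolding selfadj_def
proof (intro allI)
  fix x y
  define a where "a = cinner (A x) y"
  define b where "b = cinner (A y) x"
  have "cinner (A (x + y)) (x + y) = cinner (A x) x + a + b + cinner (A y) y"
    by (simp add: clinear_add[OF A] cinner_add_left cinner_add_right a_def b_def)
  then have "Im a + Im b = 0" using real[of "x + y"] real[of x] real[of y] by simp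
  moreover have "cinner (A (x + scaleC \<i> y)) (x + scaleC \<i> y)
      = cinner (A x) x + \<i> * a - \<i> * b + cinner (A y) y"
    by (simp add: clinear_add[OF A] clinear_scaleC[OF A] cinner_add_left cinner_add_right
        cinner_scaleC_left cinner_scaleC_right a_def b_def ring_distribs)
  then have "Re a - Re b = 0" using real[of "x + scaleC \<i> y"] real[of x] real[of y] by simp
  ultimately have "a = cnj b" by (simp add: complex_eq_iff)
  then show "cinner (A x) y = cinner x (A y)" by (simp add: a_def b_def cinner_commute[of x "A y"])
qed

lemma positive_op_imp_selfadj: "bounded_clinear A \<Longrightarrow> positive_op A \<Longrightarrow> selfadj A"
  by (rule selfadjI_Im_cinner) (auto simp: positive_op_def)

lemma cinner_gram: "bounded_clinear T \<Longrightarrow> cinner (adj T (T x)) x = complex_of_real ((norm (T x))\<^sup>2)"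
  by (simp add: cinner_adj_left cinner_self)

lemma bounded_clinear_gram: "bounded_clinear T \<Longrightarrow> bounded_clinear (\<lambda>x. adj T (T x))"
  by (rule bounded_clinear_compose[OF bounded_clinear_adj])

lemma selfadj_gram: "bounded_clinear T \<Longrightarrow> selfadj (\<lambda>x. adj T (T x))"
  by (rule selfadjI_Im_cinner[OF bounded_clinear_gram]) (simp_all add: cinner_gram)

lemma Re_cinner_selfadj_add:
  fixes A :: "'a::chilbert_space \<Rightarrow> 'a"
  assumes A: "bounded_clinear A" "selfadj A"
  shows "Re (cinner (A (x + y)) (x + y))
    = Re (cinner (A x) x) + 2 * Re (cinner (A x) y) + Re (cinner (A y) y)"
proof -
  have "cinner (A y) x = cnj (cinner (A x) y)"
    using A(2) cinner_commute[of "A x" y] by (simp add: selfadj_def)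
  then show ?thesis by (simp add: clinear_add[OF A(1)] cinner_add_left cinner_add_right)
qed

lemma quadratic_nonneg_discriminant:
  fixes \<alpha> \<beta> \<gamma> :: real
  assumes nonneg: "\<And>r. 0 \<le> \<alpha> + 2 * r * \<gamma> + r\<^sup>2 * \<beta>" and "\<beta> \<ge> 0"
  shows "\<gamma>\<^sup>2 \<le> \<alpha> * \<beta>"
proof (cases "\<beta> = 0")
  case True
  have "\<gamma> = 0"
  proof (rule ccontr)
    assume "\<gamma> \<noteq> 0"
    then have "\<alpha> + 2 * (- (\<bar>\<alpha>\<bar> + 1) / (2 * \<gamma>)) * \<gamma> = \<alpha> - (\<bar>\<alpha>\<bar> + 1)" by (simp add: field_simps)
    moreover have "0 \<le> \<alpha> + 2 * (- (\<bar>\<alpha>\<bar> + 1) / (2 * \<gamma>)) * \<gamma>"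
      using nonneg[of "- (\<bar>\<alpha>\<bar> + 1) / (2 * \<gamma>)"] True by simp
    ultimately show False by linarith
  qed
  then show ?thesis using True by simp
next
  case False
  then have "\<beta> > 0" using assms(2) by simp
  have "0 \<le> \<alpha> + 2 * (- \<gamma> / \<beta>) * \<gamma> + (- \<gamma> / \<beta>)\<^sup>2 * \<beta>" by (rule nonneg)
  also have "\<dots> = \<alpha> - \<gamma>\<^sup>2 / \<beta>" using \<open>\<beta> > 0\<close> by (simp add: field_simps power2_eq_square)
  finally show ?thesis using \<open>\<beta> > 0\<close> by (simp add: field_simps)
qed

text \<open>After rotating \<open>y\<close> so that \<open>\<langle>A x, y\<rangle>\<close> is real, positivity along the line \<open>x + r y\<close>
  is a nonnegative quadratic in \<open>r\<close>.\<close>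

lemma positive_op_Cauchy_Schwarz:
  fixes A :: "'a::chilbert_space \<Rightarrow> 'a"
  assumes A: "bounded_clinear A" and pos: "positive_op A"
  shows "(cmod (cinner (A x) y))\<^sup>2 \<le> Re (cinner (A x) x) * Re (cinner (A y) y)"
proof (cases "cinner (A x) y = 0")
  case True then show ?thesis using pos by (simp add: positive_op_def)
next
  case False
  define c where "c = cinner (A x) y"
  define u where "u = cnj c / complex_of_real (cmod c)"
  have uc: "u * c = complex_of_real (cmod c)"
  proof -
    have "cnj c * c = complex_of_real ((cmod c)\<^sup>2)" by (metis complex_norm_square mult.commute)
    then show ?thesis using False by (simp add: u_def c_def power2_eq_square)
  qed
  have "cmod u = 1" using False by (simp add: u_def norm_divide c_def)
  then have uu: "cnj u * u = 1" by (metis complex_norm_square mult.commute of_real_1 power_one)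
  show ?thesis unfolding c_def[symmetric]
  proof (rule quadratic_nonneg_discriminant)
    fix r :: real
    define s where "s = scaleC (complex_of_real r * u) y"
    have "cinner (A x) s = complex_of_real (r * cmod c)"
      by (simp add: s_def cinner_scaleC_right c_def[symmetric] mult.assoc uc)
    moreover have "cinner (A s) s = complex_of_real (r\<^sup>2) * cinner (A y) y"
      using uu by (simp add: s_def clinear_scaleC[OF A] cinner_scaleC_left cinner_scaleC_right
          power2_eq_square mult_ac)
    moreover have "0 \<le> Re (cinner (A (x + s)) (x + s))" using pos by (simp add: positive_op_def)
    ultimately show "0 \<le> Re (cinner (A x) x) + 2 * r * cmod c + r\<^sup>2 * Re (cinner (A y) y)"
      by (simp add: Re_cinner_selfadj_add[OF A positive_op_imp_selfadj[OF A pos]] mult.assoc)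
  qed (use pos in \<open>simp add: positive_op_def\<close>)
qed

lemma positive_op_form_eq_0_imp_eq_0:
  fixes A :: "'a::chilbert_space \<Rightarrow> 'a"
  assumes "bounded_clinear A" "positive_op A" "Re (cinner (A x) x) = 0"
  shows "A x = 0"
  using positive_op_Cauchy_Schwarz[OF assms(1,2), of x "A x"] assms(3)
  by (simp add: cinner_eq_zero_iff)

lemma power2_norm_positive_op_le:
  fixes Y :: "'a::chilbert_space \<Rightarrow> 'a"
  assumes Y: "bounded_clinear Y" "positive_op Y" and K: "\<And>x. norm (Y x) \<le> norm x * K"
  shows "(norm (Y x))\<^sup>2 \<le> K * Re (cinner (Y x) x)"
proof (cases "Y x = 0")
  case True then show ?thesis using Y(2) K[of 0] by (simp add: positive_op_def)
next
  case False
  have "((norm (Y x))\<^sup>2)\<^sup>2 \<le> Re (cinner (Y x) x) * Re (cinner (Y (Y x)) (Y x))"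
    using positive_op_Cauchy_Schwarz[OF Y, of x "Y x"] by (simp add: cinner_self norm_power)
  also have "\<dots> \<le> Re (cinner (Y x) x) * (K * (norm (Y x))\<^sup>2)"
  proof (rule mult_left_mono)
    have "Re (cinner (Y (Y x)) (Y x)) \<le> norm (Y (Y x)) * norm (Y x)" by (rule Re_cinner_le_norm)
    also have "\<dots> \<le> norm (Y x) * K * norm (Y x)" using K by (simp add: mult_right_mono)
    finally show "Re (cinner (Y (Y x)) (Y x)) \<le> K * (norm (Y x))\<^sup>2" by (simp add: power2_eq_square mult_ac)
  qed (use Y(2) in \<open>simp add: positive_op_def\<close>)
  finally have "(norm (Y x))\<^sup>2 * (norm (Y x))\<^sup>2 \<le> (K * Re (cinner (Y x) x)) * (norm (Y x))\<^sup>2"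
    by (simp add: power2_eq_square mult_ac)
  moreover have "(norm (Y x))\<^sup>2 > 0" using False by simp
  ultimately show ?thesis by (rule mult_right_le_imp_le)
qed

section \<open>Square roots of positive operators\<close>

text \<open>The Taylor coefficients of \<open>f(t) = 1 - sqrt(1 - t)\<close>; the recursion compares coefficients in
  \<open>f\<^sup>2 = 2 f - t\<close>.\<close>

function root_coeff :: "nat \<Rightarrow> real" where
  "root_coeff n = (if n = 0 then 0 else if n = 1 then 1/2
     else (\<Sum>k\<in>{1..<n}. root_coeff k * root_coeff (n - k)) / 2)"
  by auto
termination by (relation "Wellfounded.measure (\<lambda>n. n)") auto

declare root_coeff.simps [simp del]

lemma root_coeff_0 [simp]: "root_coeff 0 = 0"
  by (simp add: root_coeff.simps)

lemma root_coeff_1 [simp]: "root_coeff 1 = 1/2" "root_coeff (Suc 0) = 1/2"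
  by (simp_all add: root_coeff.simps)

lemma root_coeff_rec: "n \<ge> 2 \<Longrightarrow> 2 * root_coeff n = (\<Sum>k\<in>{1..<n}. root_coeff k * root_coeff (n - k))"
  by (subst root_coeff.simps) simp

lemma root_coeff_nonneg: "root_coeff n \<ge> 0"
proof (induction n rule: less_induct)
  case (less n)
  show ?case
  proof (cases "n \<ge> 2")
    case True
    have "(\<Sum>k\<in>{1..<n}. root_coeff k * root_coeff (n - k)) \<ge> 0"
      using less by (intro sum_nonneg mult_nonneg_nonneg) auto
    then show ?thesis using root_coeff_rec[OF True] by simp
  next
    case False then have "n = 0 \<or> n = 1" by auto
    then show ?thesis by auto
  qed
qed

definition pos_pairs :: "nat \<Rightarrow> (nat \<times> nat) set" where
  "pos_pairs N = {(k, j). 1 \<le> k \<and> 1 \<le> j \<and> k + j < N}"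

lemma pos_pairs_subset: "pos_pairs N \<subseteq> {..<N} \<times> {..<N}"
  by (auto simp: pos_pairs_def)

lemma finite_pos_pairs: "finite (pos_pairs N)"
  using pos_pairs_subset finite_subset by blast

lemma sum_antidiagonals_eq_sum_pos_pairs:
  fixes g :: "nat \<Rightarrow> nat \<Rightarrow> 'b::comm_monoid_add"
  shows "(\<Sum>n\<in>{2..<N}. \<Sum>k\<in>{1..<n}. g k (n - k)) = (\<Sum>(k,j)\<in>pos_pairs N. g k j)"
proof -
  have "(\<Sum>n\<in>{2..<N}. \<Sum>k\<in>{1..<n}. g k (n - k)) = (\<Sum>(n,k)\<in>Sigma {2..<N} (\<lambda>n. {1..<n}). g k (n - k))"
    by (rule sum.Sigma) auto
  also have "\<dots> = (\<Sum>(k,j)\<in>pos_pairs N. g k j)"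
    by (rule sum.reindex_bij_witness[where i="\<lambda>(k,j). (k+j, k)" and j="\<lambda>(n,k). (k, n-k)"])
      (auto simp: pos_pairs_def)
  finally show ?thesis .
qed

definition root_coeff_sum :: "nat \<Rightarrow> real" where "root_coeff_sum N = (\<Sum>n<N. root_coeff n)"

lemma power2_root_coeff_sum: "(root_coeff_sum N)\<^sup>2 = (\<Sum>(i,j)\<in>{..<N} \<times> {..<N}. root_coeff i * root_coeff j)"
  by (simp add: root_coeff_sum_def power2_eq_square sum_product sum.cartesian_product)

lemma root_coeff_sum_le_1: "root_coeff_sum N \<le> 1"
proof (induction N)
  case 0 then show ?case by (simp add: root_coeff_sum_def)
next
  case (Suc N)
  show ?case
  proof (cases "N = 0")
    case True then show ?thesis by (simp add: root_coeff_sum_def)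
  next
    case False
    have split: "{..<Suc N} = {0, 1} \<union> {2..<Suc N}" using False by auto
    have "root_coeff_sum (Suc N) = root_coeff 0 + root_coeff 1 + (\<Sum>n\<in>{2..<Suc N}. root_coeff n)"
      unfolding root_coeff_sum_def split by (subst sum.union_disjoint) auto
    also have "(\<Sum>n\<in>{2..<Suc N}. root_coeff n)
        = (\<Sum>n\<in>{2..<Suc N}. (\<Sum>k\<in>{1..<n}. root_coeff k * root_coeff (n - k)) / 2)"
    proof (rule sum.cong)
      fix n assume "n \<in> {2..<Suc N}"
      then show "root_coeff n = (\<Sum>k\<in>{1..<n}. root_coeff k * root_coeff (n - k)) / 2" using root_coeff_rec[of n] by simp
    qed simp
    also have "\<dots> = (\<Sum>n\<in>{2..<Suc N}. \<Sum>k\<in>{1..<n}. root_coeff k * root_coeff (n - k)) / 2"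
      by (rule sum_divide_distrib[symmetric])
    also have "(\<Sum>n\<in>{2..<Suc N}. \<Sum>k\<in>{1..<n}. root_coeff k * root_coeff (n - k))
        = (\<Sum>(k,j)\<in>pos_pairs (Suc N). root_coeff k * root_coeff j)"
      by (rule sum_antidiagonals_eq_sum_pos_pairs)
    also have "\<dots> \<le> (\<Sum>(k,j)\<in>{..<N} \<times> {..<N}. root_coeff k * root_coeff j)"
      by (rule sum_mono2) (auto simp: pos_pairs_def root_coeff_nonneg)
    also have "\<dots> = (root_coeff_sum N)\<^sup>2" by (simp add: power2_root_coeff_sum)
    finally have "root_coeff_sum (Suc N) \<le> 1/2 + (root_coeff_sum N)\<^sup>2 / 2" by (simp add: divide_right_mono)
    moreover have "(root_coeff_sum N)\<^sup>2 \<le> 1"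
      using Suc.IH by (simp add: abs_le_square_iff root_coeff_sum_def sum_nonneg root_coeff_nonneg power_le_one)
    ultimately show ?thesis by simp
  qed
qed

lemma summable_root_coeff: "summable root_coeff"
  by (rule summableI_nonneg_bounded[where x=1]) (auto simp: root_coeff_nonneg root_coeff_sum_le_1[unfolded root_coeff_sum_def])

lemma root_coeff_sum_tendsto: "root_coeff_sum \<longlonglongrightarrow> suminf root_coeff"
  unfolding root_coeff_sum_def by (rule summable_LIMSEQ[OF summable_root_coeff])

lemma root_coeff_sum_gap_tendsto:
  "(\<lambda>N. (root_coeff_sum N)\<^sup>2 - (root_coeff_sum (N div 2))\<^sup>2) \<longlonglongrightarrow> 0"
proof -
  have "(\<lambda>N. root_coeff_sum (N div 2)) \<longlonglongrightarrow> suminf root_coeff"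
    by (rule filterlim_compose[OF root_coeff_sum_tendsto filterlim_at_top_div_const_nat]) simp
  then have "(\<lambda>N. (root_coeff_sum N)\<^sup>2 - (root_coeff_sum (N div 2))\<^sup>2)
      \<longlonglongrightarrow> (suminf root_coeff)\<^sup>2 - (suminf root_coeff)\<^sup>2"
    by (intro tendsto_intros root_coeff_sum_tendsto)
  then show ?thesis by simp
qed

lemma power2_root_coeff_sum_half_le:
  "(root_coeff_sum (N div 2))\<^sup>2 \<le> (\<Sum>(k,j)\<in>pos_pairs N. root_coeff k * root_coeff j)"
proof -
  define g where "g = (\<lambda>(k::nat,j::nat). root_coeff k * root_coeff j)"
  define h where "h = N div 2"
  have "(root_coeff_sum h)\<^sup>2 = sum g ({..<h} \<times> {..<h})" by (simp add: power2_root_coeff_sum g_def)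
  also have "\<dots> = sum g ({1..<h} \<times> {1..<h})"
    by (rule sum.mono_neutral_right) (auto simp: g_def Suc_le_eq intro!: gr0I)
  also have "\<dots> \<le> sum g (pos_pairs N)"
    by (rule sum_mono2[OF finite_pos_pairs]) (auto simp: pos_pairs_def h_def g_def root_coeff_nonneg)
  finally show ?thesis by (simp add: h_def g_def)
qed

lemma norm_funpow_le:
  fixes X :: "'a::real_normed_vector \<Rightarrow> 'a"
  assumes "\<And>x. norm (X x) \<le> norm x"
  shows "norm ((X ^^ n) x) \<le> norm x"
proof (induction n)
  case (Suc n)
  then show ?case using assms[of "(X ^^ n) x"] by simp
qed simp

lemma selfadj_funpow:
  assumes X: "selfadj X"
  shows "selfadj (X ^^ n)"
proof (induction n)
  case 0 then show ?case by (simp add: selfadj_def)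
next
  case (Suc n)
  show ?case unfolding selfadj_def
  proof (intro allI)
    fix x y
    have "cinner (X ((X ^^ n) x)) y = cinner ((X ^^ n) x) (X y)" using X by (simp add: selfadj_def)
    also have "\<dots> = cinner x ((X ^^ n) (X y))" using Suc by (simp add: selfadj_def)
    also have "(X ^^ n) (X y) = X ((X ^^ n) y)" by (simp add: funpow_swap1)
    finally show "cinner ((X ^^ Suc n) x) y = cinner x ((X ^^ Suc n) y)" by simp
  qed
qed

lemma funpow_commute: "(\<And>x. Z (X x) = X (Z x)) \<Longrightarrow> Z ((X ^^ n) x) = (X ^^ n) (Z x)"
  by (induction n) simp_all

definition root_partial :: "('a::chilbert_space \<Rightarrow> 'a) \<Rightarrow> nat \<Rightarrow> 'a \<Rightarrow> 'a" where
  "root_partial X N x = (\<Sum>n<N. root_coeff n *\<^sub>R (X ^^ n) x)"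

definition root_series :: "('a::chilbert_space \<Rightarrow> 'a) \<Rightarrow> 'a \<Rightarrow> 'a" where
  "root_series X x = (\<Sum>n. root_coeff n *\<^sub>R (X ^^ n) x)"

locale selfadj_contraction =
  fixes X :: "'a::chilbert_space \<Rightarrow> 'a"
  assumes bounded: "bounded_clinear X" and selfadj: "selfadj X" and contraction: "norm (X x) \<le> norm x"
begin

lemma root_partial_tendsto: "(\<lambda>N. root_partial X N x) \<longlonglongrightarrow> root_series X x"
proof -
  have "summable (\<lambda>n. root_coeff n *\<^sub>R (X ^^ n) x)"
  proof (rule summable_comparison_test)
    show "\<exists>N. \<forall>n\<ge>N. norm (root_coeff n *\<^sub>R (X ^^ n) x) \<le> root_coeff n * norm x"
      using norm_funpow_le[OF contraction] root_coeff_nonneg by (auto intro!: mult_left_mono)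
    show "summable (\<lambda>n. root_coeff n * norm x)" by (intro summable_mult2 summable_root_coeff)
  qed
  then show ?thesis unfolding root_partial_def root_series_def by (rule summable_LIMSEQ)
qed

lemma bounded_clinear_root_partial: "bounded_clinear (root_partial X N)"
  unfolding root_partial_def[abs_def]
  by (intro bounded_clinear_sum bounded_clinear_scaleR bounded_clinear_funpow bounded)

lemma norm_root_partial_le: "norm (root_partial X N x) \<le> norm x"
proof -
  have "norm (root_partial X N x) \<le> (\<Sum>n<N. norm (root_coeff n *\<^sub>R (X ^^ n) x))"
    unfolding root_partial_def by (rule norm_sum)
  also have "\<dots> \<le> (\<Sum>n<N. root_coeff n * norm x)"
    using norm_funpow_le[OF contraction] root_coeff_nonneg by (intro sum_mono) (auto intro!: mult_left_mono)
  also have "\<dots> = root_coeff_sum N * norm x" by (simp add: root_coeff_sum_def sum_distrib_right)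
  also have "\<dots> \<le> norm x" using mult_right_mono[OF root_coeff_sum_le_1 norm_ge_zero] by simp
  finally show ?thesis .
qed

lemma bounded_clinear_root_series: "bounded_clinear (root_series X)"
  and norm_root_series_le: "norm (root_series X x) \<le> norm x"
  using bounded_clinear_strong_limit[of "root_partial X" 1] bounded_clinear_root_partial
    norm_root_partial_le root_partial_tendsto by simp_all

lemma selfadj_root_partial: "selfadj (root_partial X N)"
proof -
  have "cinner ((X ^^ n) x) y = cinner x ((X ^^ n) y)" for n x y
    using selfadj_funpow[OF selfadj] by (simp add: selfadj_def)
  then show ?thesis unfolding selfadj_def root_partial_def
    by (simp add: cinner_sum_left cinner_sum_right cinner_scaleR_left cinner_scaleR_right)
qed

lemma selfadj_root_series: "selfadj (root_series X)"
  unfolding selfadj_def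
proof (intro allI)
  fix x y
  have "(\<lambda>N. cinner (root_partial X N x) y) \<longlonglongrightarrow> cinner (root_series X x) y"
    "(\<lambda>N. cinner x (root_partial X N y)) \<longlonglongrightarrow> cinner x (root_series X y)"
    by (intro tendsto_intros root_partial_tendsto)+
  moreover have "cinner (root_partial X N x) y = cinner x (root_partial X N y)" for N
    using selfadj_root_partial by (simp add: selfadj_def)
  ultimately show "cinner (root_series X x) y = cinner x (root_series X y)"
    using LIMSEQ_unique by fastforce
qed

lemma root_series_commute:
  assumes Z: "bounded_clinear Z" and commute: "\<And>x. Z (X x) = X (Z x)"
  shows "Z (root_series X x) = root_series X (Z x)"
proof -
  have "Z (root_partial X N x) = root_partial X N (Z x)" for N
    unfolding root_partial_def
    by (simp add: clinear_sum[OF Z] clinear_scaleR[OF Z] funpow_commute[where Z=Z and X=X, OF commute])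
  moreover have "(\<lambda>N. Z (root_partial X N x)) \<longlonglongrightarrow> Z (root_series X x)"
    by (rule bounded_clinear_tendsto[OF Z root_partial_tendsto])
  moreover have "(\<lambda>N. root_partial X N (Z x)) \<longlonglongrightarrow> root_series X (Z x)"
    by (rule root_partial_tendsto)
  ultimately show ?thesis using LIMSEQ_unique by fastforce
qed

lemma root_series_regular:
  assumes Y: "bounded_clinear Y" and Z: "bounded_clinear Z"
    and commute: "\<And>x. Y (X x) = X (Y x)" and regular: "\<And>x. Y (X (Z x)) = Y (Z (X x))"
  shows "Y (root_series X (Z x)) = Y (Z (root_series X x))"
proof -
  have pow: "Y ((X ^^ n) (Z x)) = Y (Z ((X ^^ n) x))" for n x
  proof (induction n arbitrary: x)
    case (Suc n)
    have "Y ((X ^^ Suc n) (Z x)) = X (Y ((X ^^ n) (Z x)))" by (simp add: commute)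
    also have "\<dots> = Y (Z ((X ^^ Suc n) x))" by (simp add: Suc commute[symmetric] regular)
    finally show ?case .
  qed simp
  have "Y (root_partial X N (Z x)) = Y (Z (root_partial X N x))" for N
    unfolding root_partial_def
    by (simp add: clinear_sum[OF Y] clinear_scaleR[OF Y] clinear_sum[OF Z] clinear_scaleR[OF Z] pow)
  moreover have "(\<lambda>N. Y (root_partial X N (Z x))) \<longlonglongrightarrow> Y (root_series X (Z x))"
    by (rule bounded_clinear_tendsto[OF Y root_partial_tendsto])
  moreover have "(\<lambda>N. Y (Z (root_partial X N x))) \<longlonglongrightarrow> Y (Z (root_series X x))"
    by (rule bounded_clinear_tendsto[OF Y bounded_clinear_tendsto[OF Z root_partial_tendsto]])
  ultimately show ?thesis using LIMSEQ_unique by fastforce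
qed

lemma root_partial_square_expand:
  "root_partial X N (root_partial X N x)
     = (\<Sum>(k,j)\<in>{..<N} \<times> {..<N}. (root_coeff k * root_coeff j) *\<^sub>R (X ^^ (k + j)) x)"
proof -
  note pow = bounded_clinear_funpow[OF bounded]
  have "root_partial X N (root_partial X N x)
      = (\<Sum>k<N. root_coeff k *\<^sub>R (X ^^ k) (\<Sum>j<N. root_coeff j *\<^sub>R (X ^^ j) x))"
    by (simp add: root_partial_def)
  also have "\<dots> = (\<Sum>k<N. \<Sum>j<N. (root_coeff k * root_coeff j) *\<^sub>R (X ^^ (k + j)) x)"
    by (simp add: clinear_sum[OF pow] clinear_scaleR[OF pow] scaleR_sum_right funpow_add)
  also have "\<dots> = (\<Sum>(k,j)\<in>{..<N} \<times> {..<N}. (root_coeff k * root_coeff j) *\<^sub>R (X ^^ (k + j)) x)"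
    by (rule sum.cartesian_product)
  finally show ?thesis .
qed

lemma root_partial_double_expand:
  assumes N: "N \<ge> 2"
  shows "2 *\<^sub>R root_partial X N x - X x
    = (\<Sum>(k,j)\<in>pos_pairs N. (root_coeff k * root_coeff j) *\<^sub>R (X ^^ (k + j)) x)"
proof -
  have split: "{..<N} = {0, 1} \<union> {2..<N}" using N by auto
  have "2 *\<^sub>R root_partial X N x = (\<Sum>n<N. (2 * root_coeff n) *\<^sub>R (X ^^ n) x)"
    by (simp add: root_partial_def scaleR_sum_right)
  also have "\<dots> = X x + (\<Sum>n\<in>{2..<N}. (2 * root_coeff n) *\<^sub>R (X ^^ n) x)"
    unfolding split by (subst sum.union_disjoint) auto
  also have "(\<Sum>n\<in>{2..<N}. (2 * root_coeff n) *\<^sub>R (X ^^ n) x)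
      = (\<Sum>n\<in>{2..<N}. \<Sum>k\<in>{1..<n}. (root_coeff k * root_coeff (n - k)) *\<^sub>R (X ^^ (k + (n - k))) x)"
  proof (rule sum.cong)
    fix n assume "n \<in> {2..<N}"
    then have "(2 * root_coeff n) *\<^sub>R (X ^^ n) x
        = (\<Sum>k\<in>{1..<n}. root_coeff k * root_coeff (n - k)) *\<^sub>R (X ^^ n) x"
      using root_coeff_rec[of n] by simp
    also have "\<dots> = (\<Sum>k\<in>{1..<n}. (root_coeff k * root_coeff (n - k)) *\<^sub>R (X ^^ (k + (n - k))) x)"
      by (simp add: scaleR_sum_left)
    finally show "(2 * root_coeff n) *\<^sub>R (X ^^ n) x
        = (\<Sum>k\<in>{1..<n}. (root_coeff k * root_coeff (n - k)) *\<^sub>R (X ^^ (k + (n - k))) x)" .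
  qed simp
  also have "\<dots> = (\<Sum>(k,j)\<in>pos_pairs N. (root_coeff k * root_coeff j) *\<^sub>R (X ^^ (k + j)) x)"
    by (rule sum_antidiagonals_eq_sum_pos_pairs)
  finally show ?thesis by simp
qed

lemma norm_root_partial_square_defect_le:
  assumes N: "N \<ge> 2"
  shows "norm (root_partial X N (root_partial X N x) - (2 *\<^sub>R root_partial X N x - X x))
    \<le> ((root_coeff_sum N)\<^sup>2 - (root_coeff_sum (N div 2))\<^sup>2) * norm x"
proof -
  define f where "f = (\<lambda>(k,j). (root_coeff k * root_coeff j) *\<^sub>R (X ^^ (k + j)) x)"
  define g where "g = (\<lambda>(k::nat,j::nat). root_coeff k * root_coeff j)"
  define A where "A = {..<N} \<times> {..<N}"
  have fin: "finite A" and sub: "pos_pairs N \<subseteq> A" using pos_pairs_subset by (simp_all add: A_def)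
  have "root_partial X N (root_partial X N x) - (2 *\<^sub>R root_partial X N x - X x) = sum f (A - pos_pairs N)"
    using sum.subset_diff[OF sub fin, of f]
    by (simp add: root_partial_square_expand root_partial_double_expand[OF N] f_def A_def)
  also have "norm \<dots> \<le> (\<Sum>p\<in>A - pos_pairs N. g p * norm x)"
  proof (rule sum_norm_le)
    fix p :: "nat \<times> nat"
    obtain k j where p: "p = (k, j)" by (cases p)
    show "norm (f p) \<le> g p * norm x"
      using norm_funpow_le[OF contraction, of "k + j" x] root_coeff_nonneg[of k] root_coeff_nonneg[of j]
      by (simp add: p f_def g_def mult_left_mono)
  qed
  also have "\<dots> = (sum g A - sum g (pos_pairs N)) * norm x"
    using sum.subset_diff[OF sub fin, of g] by (simp add: sum_distrib_right)
  also have "\<dots> \<le> ((root_coeff_sum N)\<^sup>2 - (root_coeff_sum (N div 2))\<^sup>2) * norm x"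
    using power2_root_coeff_sum_half_le[of N]
    by (intro mult_right_mono) (simp_all add: power2_root_coeff_sum A_def g_def)
  finally show ?thesis .
qed

lemma root_partial_square_tendsto:
  "(\<lambda>N. root_partial X N (root_partial X N x)) \<longlonglongrightarrow> root_series X (root_series X x)"
proof (rule Lim_transform)
  show "(\<lambda>N. root_partial X N (root_series X x)) \<longlonglongrightarrow> root_series X (root_series X x)"
    by (rule root_partial_tendsto)
  have "(\<lambda>N. root_partial X N (root_partial X N x - root_series X x)) \<longlonglongrightarrow> 0"
  proof (rule Lim_null_comparison)
    show "\<forall>\<^sub>F N in sequentially. norm (root_partial X N (root_partial X N x - root_series X x))
        \<le> norm (root_partial X N x - root_series X x)"
      using norm_root_partial_le by simp
    show "(\<lambda>N. norm (root_partial X N x - root_series X x)) \<longlonglongrightarrow> 0"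
      using root_partial_tendsto[of x] by (simp add: LIM_zero tendsto_norm_zero)
  qed
  then show "(\<lambda>N. root_partial X N (root_partial X N x) - root_partial X N (root_series X x)) \<longlonglongrightarrow> 0"
    by (simp add: clinear_diff[OF bounded_clinear_root_partial])
qed

lemma root_series_square: "root_series X (root_series X x) = 2 *\<^sub>R root_series X x - X x"
proof -
  have "(\<lambda>N. root_partial X N (root_partial X N x)) \<longlonglongrightarrow> 2 *\<^sub>R root_series X x - X x"
  proof (rule Lim_transform[of "\<lambda>N. 2 *\<^sub>R root_partial X N x - X x"])
    show "(\<lambda>N. 2 *\<^sub>R root_partial X N x - X x) \<longlonglongrightarrow> 2 *\<^sub>R root_series X x - X x"
      by (intro tendsto_intros root_partial_tendsto)
    show "(\<lambda>N. root_partial X N (root_partial X N x) - (2 *\<^sub>R root_partial X N x - X x)) \<longlonglongrightarrow> 0"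
    proof (rule Lim_null_comparison)
      show "\<forall>\<^sub>F N in sequentially.
          norm (root_partial X N (root_partial X N x) - (2 *\<^sub>R root_partial X N x - X x))
          \<le> ((root_coeff_sum N)\<^sup>2 - (root_coeff_sum (N div 2))\<^sup>2) * norm x"
        using eventually_ge_at_top[of "2::nat"] by eventually_elim (rule norm_root_partial_square_defect_le)
      show "(\<lambda>N. ((root_coeff_sum N)\<^sup>2 - (root_coeff_sum (N div 2))\<^sup>2) * norm x) \<longlonglongrightarrow> 0"
        using tendsto_mult[OF root_coeff_sum_gap_tendsto tendsto_const[of "norm x"]] by simp
    qed
  qed
  then show ?thesis using root_partial_square_tendsto LIMSEQ_unique by blast
qed

end

text \<open>If \<open>K\<close> bounds \<open>Y\<close>, then \<open>X = I - Y/K\<close> is a self-adjoint contraction and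
  \<open>(Y/K)\<^sup>1\<^sup>/\<^sup>2 = (I - X)\<^sup>1\<^sup>/\<^sup>2 = I - root_series X\<close>.\<close>

locale positive_op_bound =
  fixes Y :: "'a::chilbert_space \<Rightarrow> 'a" and K :: real
  assumes bounded: "bounded_clinear Y" and positive: "positive_op Y"
    and bound: "\<And>x. norm (Y x) \<le> norm x * K" and K_pos: "K > 0"
begin

definition shift :: "'a \<Rightarrow> 'a" where "shift = (\<lambda>x. x - (1 / K) *\<^sub>R Y x)"

definition root :: "'a \<Rightarrow> 'a" where "root = (\<lambda>x. sqrt K *\<^sub>R (x - root_series shift x))"

lemma norm_shift_le: "norm (shift x) \<le> norm x"
proof -
  define q where "q = Re (cinner (Y x) x)"
  have "q \<ge> 0" using positive by (simp add: q_def positive_op_def)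
  have "(norm (shift x))\<^sup>2 = (norm x)\<^sup>2 - 2 * Re (cinner x ((1/K) *\<^sub>R Y x)) + (norm ((1/K) *\<^sub>R Y x))\<^sup>2"
    unfolding shift_def by (rule power2_norm_diff)
  also have "\<dots> = (norm x)\<^sup>2 - 2 * q / K + (norm (Y x))\<^sup>2 / K\<^sup>2"
    using K_pos by (simp add: cinner_scaleR_right q_def cinner_commute[of x "Y x"] power_divide)
  also have "\<dots> \<le> (norm x)\<^sup>2 - 2 * q / K + K * q / K\<^sup>2"
    using power2_norm_positive_op_le[OF bounded positive bound, of x] K_pos
    by (simp add: q_def divide_right_mono)
  also have "\<dots> = (norm x)\<^sup>2 - q / K" using K_pos by (simp add: power2_eq_square)
  also have "\<dots> \<le> (norm x)\<^sup>2" using \<open>q \<ge> 0\<close> K_pos by simp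
  finally show ?thesis by (rule power2_le_imp_le) simp
qed

sublocale shift: selfadj_contraction shift
proof
  show "bounded_clinear shift"
    unfolding shift_def by (intro bounded_clinear_diff bounded_clinear_ident bounded_clinear_scaleR bounded)
  show "selfadj shift" using positive_op_imp_selfadj[OF bounded positive]
    by (simp add: selfadj_def shift_def cinner_diff_left cinner_diff_right cinner_scaleR_left
        cinner_scaleR_right)
qed (rule norm_shift_le)

lemma bounded_clinear_root: "bounded_clinear root"
  unfolding root_def
  by (intro bounded_clinear_scaleR bounded_clinear_diff bounded_clinear_ident shift.bounded_clinear_root_series)

lemma root_root: "root (root x) = Y x"
proof -
  note series = shift.bounded_clinear_root_series
  have "root (root x) = K *\<^sub>R (x - 2 *\<^sub>R root_series shift x + root_series shift (root_series shift x))"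
    using K_pos by (simp add: root_def clinear_scaleR[OF series] clinear_diff[OF series] algebra_simps scaleR_2)
  also have "\<dots> = K *\<^sub>R (x - shift x)" by (simp add: shift.root_series_square)
  also have "\<dots> = Y x" using K_pos by (simp add: shift_def)
  finally show ?thesis .
qed

lemma positive_root: "positive_op root"
  unfolding positive_op_def
proof (intro allI conjI)
  fix x
  have form: "cinner (root x) x = complex_of_real (sqrt K) * (cinner x x - cinner (root_series shift x) x)"
    by (simp add: root_def cinner_scaleR_left cinner_diff_left)
  show "Im (cinner (root x) x) = 0"
    unfolding form using Im_cinner_selfadj[OF shift.selfadj_root_series, of x] by simp
  have "Re (cinner (root_series shift x) x) \<le> norm x * norm x"
    using Re_cinner_le_norm[of "root_series shift x" x] shift.norm_root_series_le[of x]
    by (meson mult_right_mono norm_ge_zero order_trans)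
  then show "0 \<le> Re (cinner (root x) x)"
    unfolding form using K_pos by (simp add: Re_cinner_self power2_eq_square)
qed

lemma root_commute:
  assumes Z: "bounded_clinear Z" and commute: "\<And>x. Z (Y x) = Y (Z x)"
  shows "Z (root x) = root (Z x)"
proof -
  have "Z (shift x) = shift (Z x)" for x by (simp add: shift_def clinear_diff[OF Z] clinear_scaleR[OF Z] commute)
  then have "Z (root_series shift x) = root_series shift (Z x)" by (rule shift.root_series_commute[OF Z])
  then show ?thesis by (simp add: root_def clinear_scaleR[OF Z] clinear_diff[OF Z])
qed

lemma root_regular:
  assumes Z: "bounded_clinear Z" and regular: "\<And>x. Y (Y (Z x)) = Y (Z (Y x))"
  shows "Y (root (Z x)) = Y (Z (root x))"
proof -
  have "Y (shift x) = shift (Y x)" for x by (simp add: shift_def clinear_diff[OF bounded] clinear_scaleR[OF bounded])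
  moreover have "Y (shift (Z x)) = Y (Z (shift x))" for x
    by (simp add: shift_def clinear_diff[OF bounded] clinear_diff[OF Z] clinear_scaleR[OF bounded]
        clinear_scaleR[OF Z] regular)
  ultimately have "Y (root_series shift (Z x)) = Y (Z (root_series shift x))"
    by (rule shift.root_series_regular[OF bounded Z])
  then show ?thesis
    by (simp add: root_def clinear_scaleR[OF bounded] clinear_diff[OF bounded] clinear_scaleR[OF Z]
        clinear_diff[OF Z])
qed

text \<open>Uniqueness: a second positive root \<open>B\<close> commutes with \<open>Y = B\<^sup>2\<close>, hence with \<open>root\<close>; then
  \<open>(root + B)(root - B) = 0\<close>, so both positive operators vanish on the range of \<open>root - B\<close>,
  which forces \<open>(root - B)\<^sup>2 = 0\<close>.\<close>

lemma root_unique: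
  assumes B: "bounded_clinear B" "positive_op B" "\<And>x. B (B x) = Y x"
  shows "B x = root x"
proof -
  have root_sa: "selfadj root" by (rule positive_op_imp_selfadj[OF bounded_clinear_root positive_root])
  have B_sa: "selfadj B" by (rule positive_op_imp_selfadj[OF B(1,2)])
  have BY: "B (Y x) = Y (B x)" for x by (simp add: B(3)[symmetric])
  have B_root: "B (root x) = root (B x)" for x by (rule root_commute[OF B(1) BY])
  define D where "D = (\<lambda>x. root x - B x)"
  have D_sa: "cinner (D u) w = cinner u (D w)" for u w
    using root_sa B_sa by (simp add: D_def selfadj_def cinner_diff_left cinner_diff_right)
  have "D (D x) = 0"
  proof -
    define y where "y = D x"
    have "root y + B y = 0"
      by (simp add: y_def D_def clinear_diff[OF bounded_clinear_root] clinear_diff[OF B(1)] root_root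
          B(3) B_root)
    then have "Re (cinner (root y) y) + Re (cinner (B y) y) = 0"
      by (metis cinner_add_left cinner_zero_left plus_complex.sel(1) zero_complex.sel(1))
    moreover have "Re (cinner (root y) y) \<ge> 0" "Re (cinner (B y) y) \<ge> 0"
      using positive_root B(2) by (auto simp: positive_op_def)
    ultimately have "root y = 0" "B y = 0"
      using positive_op_form_eq_0_imp_eq_0[OF bounded_clinear_root positive_root]
        positive_op_form_eq_0_imp_eq_0[OF B(1,2)] by auto
    then show ?thesis by (simp add: D_def y_def)
  qed
  then have "cinner (D x) (D x) = 0" using D_sa[of x "D x"] by simp
  then show ?thesis by (simp add: cinner_eq_zero_iff D_def)
qed

lemma op_sqrt_eq_root: "op_sqrt Y = root"
  unfolding op_sqrt_def
proof (rule the_equality)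
  show "bounded_clinear root \<and> positive_op root \<and> root \<circ> root = Y"
    using bounded_clinear_root positive_root root_root by (auto simp: fun_eq_iff)
next
  fix B assume "bounded_clinear B \<and> positive_op B \<and> B \<circ> B = Y"
  then show "B = root" using root_unique by (auto simp: fun_eq_iff)
qed

end

lemma positive_op_bound_exists:
  assumes "bounded_clinear Y" "positive_op Y"
  obtains K where "positive_op_bound Y K"
  using bounded_clinear_pos_bound[OF assms(1)] assms by (metis positive_op_bound.intro)

context
  fixes Y :: "'a::chilbert_space \<Rightarrow> 'a"
  assumes Y: "bounded_clinear Y" "positive_op Y"
begin

lemma bounded_clinear_op_sqrt: "bounded_clinear (op_sqrt Y)"
  and positive_op_sqrt: "positive_op (op_sqrt Y)"
  and op_sqrt_op_sqrt: "op_sqrt Y (op_sqrt Y x) = Y x"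
proof -
  obtain K where "positive_op_bound Y K" using positive_op_bound_exists[OF Y] .
  then interpret positive_op_bound Y K .
  show "bounded_clinear (op_sqrt Y)" "positive_op (op_sqrt Y)" "op_sqrt Y (op_sqrt Y x) = Y x"
    by (simp_all add: op_sqrt_eq_root bounded_clinear_root positive_root root_root)
qed

lemma op_sqrt_regular:
  assumes "bounded_clinear Z" and "\<And>x. Y (Y (Z x)) = Y (Z (Y x))"
  shows "Y (op_sqrt Y (Z x)) = Y (Z (op_sqrt Y x))"
proof -
  obtain K where "positive_op_bound Y K" using positive_op_bound_exists[OF Y] .
  then interpret positive_op_bound Y K .
  show ?thesis using root_regular[OF assms] by (simp add: op_sqrt_eq_root)
qed

lemma selfadj_op_sqrt: "selfadj (op_sqrt Y)"
  by (rule positive_op_imp_selfadj[OF bounded_clinear_op_sqrt positive_op_sqrt])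

lemma cinner_eq_power2_norm_op_sqrt: "cinner (Y x) x = complex_of_real ((norm (op_sqrt Y x))\<^sup>2)"
proof -
  have "cinner (Y x) x = cinner (op_sqrt Y (op_sqrt Y x)) x" by (simp add: op_sqrt_op_sqrt)
  also have "\<dots> = cinner (op_sqrt Y x) (op_sqrt Y x)" using selfadj_op_sqrt by (simp add: selfadj_def)
  finally show ?thesis by (simp add: cinner_self)
qed

lemma op_sqrt_eq_0_iff: "op_sqrt Y x = 0 \<longleftrightarrow> Y x = 0"
  using op_sqrt_op_sqrt[of x] cinner_eq_power2_norm_op_sqrt[of x] clinear_zero[OF bounded_clinear_op_sqrt] by auto

end

section \<open>Inverses of coercive self-adjoint operators\<close>

lemma closed_range_bounded_below:
  fixes G :: "'a::chilbert_space \<Rightarrow> 'a"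
  assumes G: "bounded_clinear G" and c: "c > 0" and below: "\<And>x. c * norm x \<le> norm (G x)"
  shows "closed (range G)"
proof (unfold closed_sequential_limits, intro allI impI)
  fix y l assume y: "(\<forall>n. y n \<in> range G) \<and> y \<longlonglongrightarrow> l"
  then have "\<forall>n. \<exists>z. y n = G z" by blast
  then obtain x where x: "\<And>n. y n = G (x n)" by metis
  have "Cauchy x"
  proof (unfold Cauchy_iff, intro allI impI)
    fix e :: real assume "e > 0"
    then obtain N where N: "\<And>m n. m \<ge> N \<Longrightarrow> n \<ge> N \<Longrightarrow> norm (y m - y n) < c * e"
      using LIMSEQ_imp_Cauchy[of y l] y c unfolding Cauchy_iff by (meson mult_pos_pos)
    have "norm (x m - x n) < e" if "m \<ge> N" "n \<ge> N" for m n
    proof -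
      have "c * norm (x m - x n) \<le> norm (y m - y n)" using below[of "x m - x n"] by (simp add: x clinear_diff[OF G])
      also have "\<dots> < c * e" using N that by blast
      finally show ?thesis using c by simp
    qed
    then show "\<exists>M. \<forall>m\<ge>M. \<forall>n\<ge>M. norm (x m - x n) < e" by blast
  qed
  then obtain x0 where "x \<longlonglongrightarrow> x0" using Cauchy_convergent_iff convergent_def by blast
  then have "(\<lambda>n. G (x n)) \<longlonglongrightarrow> G x0" by (rule bounded_clinear_tendsto[OF G])
  moreover have "y = (\<lambda>n. G (x n))" by (simp add: x fun_eq_iff)
  ultimately have "l = G x0" using y LIMSEQ_unique by auto
  then show "l \<in> range G" by simp
qed

context
  fixes G :: "'a::chilbert_space \<Rightarrow> 'a" and c :: real
  assumes G: "bounded_clinear G" "selfadj G" and c: "c > 0"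
    and coercive: "\<And>x. c * (norm x)\<^sup>2 \<le> Re (cinner (G x) x)"
begin

lemma coercive_bounded_below: "c * norm x \<le> norm (G x)"
proof (cases "x = 0")
  case False
  have "c * (norm x)\<^sup>2 \<le> norm (G x) * norm x" using coercive[of x] Re_cinner_le_norm[of "G x" x] by linarith
  then show ?thesis using False by (simp add: power2_eq_square mult_ac)
qed simp

lemma bij_coercive: "bij G"
  unfolding bij_def
proof
  show "inj G"
  proof (rule injI)
    fix x y assume "G x = G y"
    then have "c * norm (x - y) \<le> 0" using coercive_bounded_below[of "x - y"] by (simp add: clinear_diff[OF G(1)])
    then show "x = y" using c by (simp add: mult_le_0_iff)
  qed
  have closed: "closed (range G)" by (rule closed_range_bounded_below[OF G(1) c coercive_bounded_below])
  have "y \<in> range G" for y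
    \<comment> \<open>the residual of the projection onto the range is orthogonal to \<open>G r\<close>, so coercivity kills it\<close>
  proof -
    define r where "r = y - orth_proj (range G) y"
    note range = csubspace_range[OF G(1)] closed
    have "cinner r (G r) = 0" using orth_proj_orthogonal[OF range] by (simp add: r_def)
    then have "c * (norm r)\<^sup>2 \<le> 0" using coercive[of r] G(2) by (simp add: selfadj_def)
    then have "r = 0" using c by (simp add: mult_le_0_iff)
    then show ?thesis using orth_proj_in[OF range, of y] unfolding r_def by (metis right_minus_eq)
  qed
  then show "surj G" by blast
qed

lemma coercive_inv_cancel: "G (inv G x) = x" "inv G (G x) = x"
  using bij_coercive by (simp_all add: bij_is_surj surj_f_inv_f bij_is_inj)

lemma norm_coercive_inv_le: "c * norm (inv G x) \<le> norm x"
  using coercive_bounded_below[of "inv G x"] by (simp add: coercive_inv_cancel)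

lemma bounded_clinear_coercive_inv: "bounded_clinear (inv G)"
proof (rule bounded_clinearI[where K="1 / c"])
  have inj: "inj G" using bij_coercive bij_is_inj by blast
  fix x y show "inv G (x + y) = inv G x + inv G y"
    by (rule injD[OF inj]) (simp add: coercive_inv_cancel clinear_add[OF G(1)])
  fix a show "inv G (scaleC a x) = scaleC a (inv G x)"
    by (rule injD[OF inj]) (simp add: coercive_inv_cancel clinear_scaleC[OF G(1)])
  show "norm (inv G x) \<le> norm x * (1 / c)" using norm_coercive_inv_le[of x] c by (simp add: field_simps)
qed

lemma selfadj_coercive_inv: "selfadj (inv G)"
  unfolding selfadj_def
proof (intro allI)
  fix x y
  have "cinner (inv G x) y = cinner (inv G x) (G (inv G y))" by (simp only: coercive_inv_cancel)
  also have "\<dots> = cinner (G (inv G x)) (inv G y)" using G(2) by (simp add: selfadj_def)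
  finally show "cinner (inv G x) y = cinner x (inv G y)" by (simp only: coercive_inv_cancel)
qed

end

section \<open>Defect spaces and regularity\<close>

definition ker_perp :: "('a::chilbert_space \<Rightarrow> 'a) \<Rightarrow> 'a set" where
  "ker_perp Y = {w. \<forall>z. Y z = 0 \<longrightarrow> cinner z w = 0}"

lemma csubspace_ker_perp: "csubspace (ker_perp Y)"
  by (auto simp: csubspace_def ker_perp_def cinner_add_right cinner_scaleC_right)

lemma closed_ker_perp: "closed (ker_perp Y)"
proof -
  have "ker_perp Y = (\<Inter>z\<in>{z. Y z = 0}. {w. cinner z w = 0})" by (auto simp: ker_perp_def)
  also have "closed \<dots>"
    by (intro closed_INT ballI closed_Collect_eq continuous_on_cinner continuous_on_const continuous_on_id)
  finally show ?thesis .
qed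

lemma closure_range_selfadj:
  fixes B :: "'a::chilbert_space \<Rightarrow> 'a"
  assumes B: "bounded_clinear B" "selfadj B"
  shows "closure (range B) = ker_perp B"
proof
  show "closure (range B) \<subseteq> ker_perp B"
  proof (rule closure_minimal[OF _ closed_ker_perp])
    show "range B \<subseteq> ker_perp B" unfolding ker_perp_def
    proof safe
      fix u z assume "B z = 0"
      have "cinner z (B u) = cinner (B z) u" using B(2) by (simp add: selfadj_def)
      with \<open>B z = 0\<close> show "cinner z (B u) = 0" by simp
    qed
  qed
next
  show "ker_perp B \<subseteq> closure (range B)"
  proof
    fix w assume w: "w \<in> ker_perp B"
    define M where "M = closure (range B)"
    have M: "csubspace M" "closed M" unfolding M_def by (auto intro: csubspace_closure csubspace_range B(1))
    define r where "r = w - orth_proj M w"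
    have "cinner r (B u) = 0" for u
      using orth_proj_orthogonal[OF M, of w] closure_subset[of "range B"] by (auto simp: M_def r_def)
    then have "cinner (B r) u = 0" for u using B(2) by (simp add: selfadj_def)
    then have "B r = 0" using cinner_eq_zero_iff by blast
    then have "cinner r r = 0"
      using w orth_proj_orthogonal[OF M, of w] orth_proj_in[OF M, of w]
      by (simp add: ker_perp_def r_def cinner_diff_right)
    then show "w \<in> closure (range B)"
      using orth_proj_in[OF M, of w] by (simp add: cinner_eq_zero_iff r_def M_def)
  qed
qed

context
  fixes Y :: "'a::chilbert_space \<Rightarrow> 'a"
  assumes Y: "bounded_clinear Y" "positive_op Y"
begin

lemma closure_range_op_sqrt: "closure (range (op_sqrt Y)) = ker_perp Y"
  using closure_range_selfadj[OF bounded_clinear_op_sqrt[OF Y] selfadj_op_sqrt[OF Y]]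
  by (simp add: ker_perp_def op_sqrt_eq_0_iff[OF Y])

lemma op_sqrt_in_ker_perp: "op_sqrt Y x \<in> ker_perp Y"
  using closure_subset[of "range (op_sqrt Y)"] closure_range_op_sqrt by auto

lemma regular_op_iff: "bounded_clinear Z \<Longrightarrow> regular_op Y Z \<longleftrightarrow> (\<forall>x. Y (Y (Z x)) = Y (Z (Y x)))"
proof -
  assume Z: "bounded_clinear Z"
  define B where "B = op_sqrt Y"
  have BB: "B (B x) = Y x" for x unfolding B_def by (rule op_sqrt_op_sqrt[OF Y])
  have "regular_op Y Z \<longleftrightarrow> (\<forall>x. Y (Z x) = B (Z (B x)))"
    by (simp add: regular_op_def B_def fun_eq_iff)
  also have "\<dots> \<longleftrightarrow> (\<forall>x. Y (Y (Z x)) = Y (Z (Y x)))"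
  proof
    assume h: "\<forall>x. Y (Z x) = B (Z (B x))"
    show "\<forall>x. Y (Y (Z x)) = Y (Z (Y x))"
    proof
      fix x
      have "Y (Y (Z x)) = Y (B (Z (B x)))" by (simp only: h[rule_format, of x])
      also have "\<dots> = B (B (B (Z (B x))))" by (simp only: BB[symmetric])
      also have "B (B (Z (B x))) = Y (Z (B x))" by (simp only: BB)
      also have "Y (Z (B x)) = B (Z (B (B x)))" by (simp only: h[rule_format])
      also have "B (B (Z (B (B x)))) = Y (Z (Y x))" by (simp only: BB)
      finally show "Y (Y (Z x)) = Y (Z (Y x))" .
    qed
  next
    assume h: "\<forall>x. Y (Y (Z x)) = Y (Z (Y x))"
    show "\<forall>x. Y (Z x) = B (Z (B x))"
    proof
      fix x
      have "Y (B (Z x)) = Y (Z (B x))" unfolding B_def by (rule op_sqrt_regular[OF Y Z]) (use h in blast)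
      then have "B (B (Z x) - Z (B x)) = 0"
        by (simp add: B_def op_sqrt_eq_0_iff[OF Y] clinear_diff[OF Y(1)])
      then show "Y (Z x) = B (Z (B x))"
        by (simp add: B_def clinear_diff[OF bounded_clinear_op_sqrt[OF Y]] op_sqrt_op_sqrt[OF Y])
    qed
  qed
  finally show ?thesis .
qed

text \<open>The defining identity \<open>Y Z = Y\<^sup>1\<^sup>/\<^sup>2 Z Y\<^sup>1\<^sup>/\<^sup>2\<close> says that \<open>Y\<^sup>1\<^sup>/\<^sup>2 Z\<close> and \<open>Z Y\<^sup>1\<^sup>/\<^sup>2\<close> differ by
  an element of \<open>ker Y\<close>; projecting onto its orthocomplement removes the difference.\<close>

lemma op_sqrt_regular_eq_orth_proj:
  assumes Z: "bounded_clinear Z" and regular: "regular_op Y Z"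
  shows "op_sqrt Y (Z x) = orth_proj (ker_perp Y) (Z (op_sqrt Y x))"
proof -
  define B where "B = op_sqrt Y"
  note M = csubspace_ker_perp[of Y] closed_ker_perp[of Y]
  have "B (B (Z x)) = B (Z (B x))"
    using regular op_sqrt_op_sqrt[OF Y] by (simp add: regular_op_def fun_eq_iff B_def)
  then have "Y (B (Z x) - Z (B x)) = 0"
    using bounded_clinear_op_sqrt[OF Y] by (simp add: clinear_diff B_def flip: op_sqrt_eq_0_iff[OF Y])
  then have "orth_proj (ker_perp Y) (B (Z x) - Z (B x)) = 0"
    by (intro orth_proj_eq_0[OF M]) (auto simp: ker_perp_def)
  then show ?thesis
    using orth_proj_id[OF M op_sqrt_in_ker_perp] by (simp add: orth_proj_diff[OF M] B_def)
qed

text \<open>The forward direction proves the inequality on \<open>range Y\<^sup>1\<^sup>/\<^sup>2\<close> and extends it by continuity to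
  its closure \<open>ker_perp Y\<close>.\<close>

lemma norm_op_sqrt_le_iff_compression:
  assumes Z: "bounded_clinear Z" and regular: "regular_op Y Z"
  shows "(\<forall>x. norm (op_sqrt Y (Z x)) \<le> norm (op_sqrt Y x))
    \<longleftrightarrow> (\<forall>v\<in>ker_perp Y. norm (orth_proj (ker_perp Y) (Z v)) \<le> norm v)"
proof
  assume sqrt_le: "\<forall>x. norm (op_sqrt Y (Z x)) \<le> norm (op_sqrt Y x)"
  note M = csubspace_ker_perp[of Y] closed_ker_perp[of Y]
  have "closed {v. norm (orth_proj (ker_perp Y) (Z v)) \<le> norm v}"
    by (intro closed_Collect_le continuous_on_norm continuous_on_id
        continuous_on_compose2[OF continuous_on_orth_proj[OF M] bounded_clinear_continuous_on[OF Z]]) auto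
  moreover have "range (op_sqrt Y) \<subseteq> {v. norm (orth_proj (ker_perp Y) (Z v)) \<le> norm v}"
    using sqrt_le by (auto simp: op_sqrt_regular_eq_orth_proj[OF Z regular, symmetric])
  ultimately have "closure (range (op_sqrt Y)) \<subseteq> {v. norm (orth_proj (ker_perp Y) (Z v)) \<le> norm v}"
    by (rule closure_minimal[rotated])
  then show "\<forall>v\<in>ker_perp Y. norm (orth_proj (ker_perp Y) (Z v)) \<le> norm v"
    by (auto simp: closure_range_op_sqrt)
next
  assume "\<forall>v\<in>ker_perp Y. norm (orth_proj (ker_perp Y) (Z v)) \<le> norm v"
  then show "\<forall>x. norm (op_sqrt Y (Z x)) \<le> norm (op_sqrt Y x)"
    by (simp add: op_sqrt_regular_eq_orth_proj[OF Z regular] op_sqrt_in_ker_perp)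
qed

end

text \<open>If \<open>Q = I + s W\<close> is invertible with inverse \<open>R\<close>, then \<open>R\<close> commutes with \<open>W\<close>, and the identity
  \<open>W\<^sup>2 T = W T W\<close> passes to the pair \<open>R W\<close>, \<open>T R\<close>: the commutator \<open>T Q - Q T = s (T W - W T)\<close> is
  annihilated by \<open>W\<close>.\<close>

lemma regular_transfer_inverse:
  fixes T W R Q :: "'a::chilbert_space \<Rightarrow> 'a"
  assumes T: "bounded_clinear T" and W: "bounded_clinear W" and R: "bounded_clinear R"
    and RQ: "\<And>x. R (Q x) = x" and QR: "\<And>x. Q (R x) = x" and Q: "\<And>x. Q x = x + s *\<^sub>R W x"
    and regular: "\<And>x. W (W (T x)) = W (T (W x))"
  shows "R (W (R (W (T (R x))))) = R (W (T (R (R (W x)))))"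
proof -
  have WQ: "W (Q x) = Q (W x)" for x by (simp add: Q clinear_add[OF W] clinear_scaleR[OF W])
  have WR: "W (R x) = R (W x)" for x by (metis RQ QR WQ)
  have W_TR: "W (T (R x)) = R (W (T x))" for x
  proof -
    define u where "u = R x"
    have "R (T x) - T (R x) = R (T (Q u) - Q (T u))"
      by (simp add: u_def QR RQ clinear_diff[OF R])
    also have "T (Q u) - Q (T u) = s *\<^sub>R (T (W u) - W (T u))"
      by (simp add: Q clinear_add[OF T] clinear_scaleR[OF T] algebra_simps)
    finally have "W (R (T x) - T (R x)) = s *\<^sub>R R (W (T (W u)) - W (W (T u)))"
      by (simp add: clinear_scaleR[OF R] clinear_scaleR[OF W] WR clinear_diff[OF W])
    also have "\<dots> = 0" by (simp add: regular clinear_zero[OF R])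
    finally show ?thesis by (simp add: clinear_diff[OF W] WR)
  qed
  have "R (W (R (W (T (R x))))) = R (R (W (T (W (R x)))))" by (simp add: WR regular)
  also have "\<dots> = R (W (T (R (R (W x)))))" by (simp add: WR W_TR)
  finally show ?thesis .
qed

lemma regular_op_iff_op_sqrt:
  assumes "bounded_clinear Y" "positive_op Y"
  shows "regular_op Y Z \<longleftrightarrow> (op_sqrt Y \<circ> op_sqrt Y) \<circ> Z = op_sqrt Y \<circ> Z \<circ> op_sqrt Y"
proof -
  have "op_sqrt Y \<circ> op_sqrt Y = Y" using op_sqrt_op_sqrt[OF assms] by (simp add: fun_eq_iff)
  then show ?thesis by (simp add: regular_op_def)
qed

section \<open>Concave operators and 2-hypercontractions\<close>

abbreviation defect_sq :: "('a::chilbert_space \<Rightarrow> 'a) \<Rightarrow> 'a \<Rightarrow> 'a" where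
  "defect_sq C \<equiv> \<lambda>x. x - adj C (C x)"

lemma bounded_clinear_Delta: "bounded_clinear T \<Longrightarrow> bounded_clinear (Delta T)"
  unfolding Delta_def by (intro bounded_clinear_diff bounded_clinear_gram bounded_clinear_ident)

lemma bounded_clinear_defect_sq: "bounded_clinear C \<Longrightarrow> bounded_clinear (defect_sq C)"
  by (intro bounded_clinear_diff bounded_clinear_gram bounded_clinear_ident)

lemma selfadj_Delta: "bounded_clinear T \<Longrightarrow> selfadj (Delta T)"
  using selfadj_gram by (simp add: selfadj_def Delta_def cinner_diff_left cinner_diff_right)

lemma cinner_Delta:
  "bounded_clinear T \<Longrightarrow> cinner (Delta T x) x = complex_of_real ((norm (T x))\<^sup>2 - (norm x)\<^sup>2)"
  by (simp add: Delta_def cinner_diff_left cinner_gram cinner_self)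

lemma cinner_defect_sq:
  "bounded_clinear C \<Longrightarrow> cinner (defect_sq C x) x = complex_of_real ((norm x)\<^sup>2 - (norm (C x))\<^sup>2)"
  by (simp add: cinner_diff_left cinner_gram cinner_self)

lemma positive_op_Delta:
  "bounded_clinear T \<Longrightarrow> (\<And>x. norm x \<le> norm (T x)) \<Longrightarrow> positive_op (Delta T)"
  by (simp add: positive_op_def cinner_Delta power_mono)

lemma positive_op_defect_sq:
  "bounded_clinear C \<Longrightarrow> (\<And>x. norm (C x) \<le> norm x) \<Longrightarrow> positive_op (defect_sq C)"
  by (simp add: positive_op_def cinner_defect_sq power_mono)

lemma cinner_eq_power2_norm_op_sqrt_Delta:
  assumes "bounded_clinear T" "\<And>x. norm x \<le> norm (T x)"
  shows "(norm (op_sqrt (Delta T) x))\<^sup>2 = (norm (T x))\<^sup>2 - (norm x)\<^sup>2"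
  using cinner_eq_power2_norm_op_sqrt[OF bounded_clinear_Delta positive_op_Delta, OF assms(1) assms, of x]
    cinner_Delta[OF assms(1), of x]
  by (metis of_real_eq_iff)

lemma power2_norm_defect_op:
  assumes "bounded_clinear C" "\<And>x. norm (C x) \<le> norm x"
  shows "(norm (defect_op C x))\<^sup>2 = (norm x)\<^sup>2 - (norm (C x))\<^sup>2"
  using cinner_eq_power2_norm_op_sqrt[OF bounded_clinear_defect_sq positive_op_defect_sq, OF assms(1) assms, of x]
    cinner_defect_sq[OF assms(1), of x]
  unfolding defect_op_def by (metis of_real_eq_iff)

lemma norm_le_iff_power2_le: "norm x \<le> norm y \<longleftrightarrow> (norm x)\<^sup>2 \<le> (norm y)\<^sup>2"
  by (simp add: abs_le_square_iff[symmetric])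

lemma concave_op_iff:
  fixes T :: "'a::chilbert_space \<Rightarrow> 'a"
  assumes T: "bounded_clinear T"
  shows "concave_op T \<longleftrightarrow> (\<forall>x. (norm (T (T x)))\<^sup>2 - 2 * (norm (T x))\<^sup>2 + (norm x)\<^sup>2 \<le> 0)"
proof -
  define f where "f x = (norm (T (T x)))\<^sup>2 - 2 * (norm (T x))\<^sup>2 + (norm x)\<^sup>2" for x
  have form: "cinner (0 - (adj T (adj T (T (T x))) - 2 *\<^sub>R adj T (T x) + x)) x = complex_of_real (- f x)"
    for x
    by (simp add: f_def cinner_diff_left cinner_add_left cinner_scaleR_left cinner_adj_left[OF T]
        cinner_self cinner_minus_left)
  have "concave_op T \<longleftrightarrow> (\<forall>x. f x \<le> 0)" unfolding concave_op_def op_le_def positive_op_def form by simp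
  then show ?thesis by (simp add: f_def)
qed

lemma hypercontraction2_iff:
  fixes C :: "'a::chilbert_space \<Rightarrow> 'a"
  assumes C: "bounded_clinear C"
  shows "hypercontraction2 C \<longleftrightarrow>
    (\<forall>x. norm (C x) \<le> norm x) \<and> (\<forall>x. 0 \<le> (norm x)\<^sup>2 - 2 * (norm (C x))\<^sup>2 + (norm (C (C x)))\<^sup>2)"
proof -
  have form: "cinner (x - 2 *\<^sub>R adj C (C x) + adj C (adj C (C (C x)))) x
      = complex_of_real ((norm x)\<^sup>2 - 2 * (norm (C x))\<^sup>2 + (norm (C (C x)))\<^sup>2)" for x
    by (simp add: cinner_diff_left cinner_add_left cinner_scaleR_left cinner_adj_left[OF C] cinner_self)
  have "0 \<le> (norm x)\<^sup>2 - (norm (C x))\<^sup>2 \<longleftrightarrow> norm (C x) \<le> norm x" for x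
    unfolding norm_le_iff_power2_le by simp
  then show ?thesis unfolding hypercontraction2_def positive_op_def cinner_defect_sq[OF C] form by auto
qed

text \<open>Along the orbit of \<open>T\<close>, concavity makes \<open>\<parallel>T x\<parallel>\<^sup>2 - \<parallel>x\<parallel>\<^sup>2\<close> nonincreasing, so
  \<open>\<parallel>T\<^sup>n x\<parallel>\<^sup>2 \<le> \<parallel>x\<parallel>\<^sup>2 + n (\<parallel>T x\<parallel>\<^sup>2 - \<parallel>x\<parallel>\<^sup>2)\<close>, which forces the increment to be nonnegative.\<close>

lemma concave_op_imp_expansive:
  fixes T :: "'a::chilbert_space \<Rightarrow> 'a"
  assumes T: "bounded_clinear T" "concave_op T"
  shows "norm x \<le> norm (T x)"
proof -
  define q where "q y = (norm (T y))\<^sup>2 - (norm y)\<^sup>2" for y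
  have q_step: "q (T y) \<le> q y" for y
  proof -
    have "(norm (T (T y)))\<^sup>2 - 2 * (norm (T y))\<^sup>2 + (norm y)\<^sup>2 \<le> 0"
      using T concave_op_iff by blast
    then show ?thesis unfolding q_def by linarith
  qed
  have q_orbit: "q ((T ^^ k) x) \<le> q x" for k
  proof (induction k)
    case (Suc k)
    then show ?case using order_trans[OF q_step[of "(T ^^ k) x"] Suc.IH] by simp
  qed simp
  have bound: "(norm ((T ^^ n) x))\<^sup>2 \<le> (norm x)\<^sup>2 + real n * q x" for n
  proof (induction n)
    case (Suc n)
    have "(norm ((T ^^ Suc n) x))\<^sup>2 = (norm ((T ^^ n) x))\<^sup>2 + q ((T ^^ n) x)" by (simp add: q_def)
    also have "\<dots> \<le> (norm x)\<^sup>2 + real n * q x + q x" using Suc q_orbit[of n] by linarith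
    finally show ?case by (simp add: algebra_simps)
  qed simp
  have "q x \<ge> 0"
  proof (rule ccontr)
    assume "\<not> q x \<ge> 0"
    then obtain n where n: "(norm x)\<^sup>2 < real n * (- q x)" using reals_Archimedean3[of "- q x"] by auto
    have "0 \<le> (norm x)\<^sup>2 + real n * q x" using order_trans[OF zero_le_power2 bound[of n]] .
    with n show False by (simp add: algebra_simps)
  qed
  then show ?thesis unfolding norm_le_iff_power2_le by (simp add: q_def)
qed

lemma concave_op_iff_compression:
  fixes T :: "'a::chilbert_space \<Rightarrow> 'a"
  assumes T: "bounded_clinear T" and expansive: "\<And>x. norm x \<le> norm (T x)"
    and regular: "regular_op (Delta T) T"
  shows "concave_op T \<longleftrightarrow>
    (\<forall>v\<in>ker_perp (Delta T). norm (orth_proj (ker_perp (Delta T)) (T v)) \<le> norm v)"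
proof -
  note Delta = bounded_clinear_Delta[OF T] positive_op_Delta[OF T expansive]
  have "(norm (T (T x)))\<^sup>2 - 2 * (norm (T x))\<^sup>2 + (norm x)\<^sup>2
      = (norm (op_sqrt (Delta T) (T x)))\<^sup>2 - (norm (op_sqrt (Delta T) x))\<^sup>2" for x
    by (simp add: cinner_eq_power2_norm_op_sqrt_Delta[OF T expansive])
  then have "concave_op T \<longleftrightarrow> (\<forall>x. norm (op_sqrt (Delta T) (T x)) \<le> norm (op_sqrt (Delta T) x))"
    unfolding concave_op_iff[OF T] norm_le_iff_power2_le by simp
  also have "\<dots> \<longleftrightarrow> (\<forall>v\<in>ker_perp (Delta T). norm (orth_proj (ker_perp (Delta T)) (T v)) \<le> norm v)"
    by (rule norm_op_sqrt_le_iff_compression[OF Delta T regular])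
  finally show ?thesis .
qed

lemma hypercontraction2_iff_compression:
  fixes C :: "'a::chilbert_space \<Rightarrow> 'a"
  assumes C: "bounded_clinear C" and contraction: "\<And>x. norm (C x) \<le> norm x"
    and regular: "regular_op (defect_sq C) C"
  shows "hypercontraction2 C \<longleftrightarrow>
    (\<forall>v\<in>ker_perp (defect_sq C). norm (orth_proj (ker_perp (defect_sq C)) (C v)) \<le> norm v)"
proof -
  note defect = bounded_clinear_defect_sq[OF C] positive_op_defect_sq[OF C contraction]
  have "(norm x)\<^sup>2 - 2 * (norm (C x))\<^sup>2 + (norm (C (C x)))\<^sup>2
      = (norm (defect_op C x))\<^sup>2 - (norm (defect_op C (C x)))\<^sup>2" for x
    by (simp add: power2_norm_defect_op[OF C contraction])
  then have "hypercontraction2 C \<longleftrightarrow> (\<forall>x. norm (defect_op C (C x)) \<le> norm (defect_op C x))"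
    unfolding hypercontraction2_iff[OF C] norm_le_iff_power2_le by (simp add: contraction)
  also have "\<dots> \<longleftrightarrow>
      (\<forall>v\<in>ker_perp (defect_sq C). norm (orth_proj (ker_perp (defect_sq C)) (C v)) \<le> norm v)"
    unfolding defect_op_def by (rule norm_op_sqrt_le_iff_compression[OF defect C regular])
  finally show ?thesis .
qed

section \<open>The Cauchy dual\<close>

lemma left_invertible_imp_bounded_below:
  assumes "left_invertible T"
  obtains c where "c > 0" "\<And>x. c * norm x \<le> norm (T x)"
proof -
  obtain S where S: "bounded_clinear S" "S \<circ> T = id" using assms by (auto simp: left_invertible_def)
  obtain K where K: "\<And>x. norm (S x) \<le> norm x * K" "K > 0" using bounded_clinear_pos_bound[OF S(1)] by blast
  have "(1 / K) * norm x \<le> norm (T x)" for x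
    using K(1)[of "T x"] K(2) S(2) by (simp add: fun_eq_iff field_simps)
  with K(2) show ?thesis using that[of "1 / K"] by simp
qed

lemma gram_coercive:
  fixes T :: "'a::chilbert_space \<Rightarrow> 'a"
  assumes T: "bounded_clinear T" and below: "\<And>x. c * norm x \<le> norm (T x)" and c: "c > 0"
  shows "c\<^sup>2 * (norm x)\<^sup>2 \<le> Re (cinner (adj T (T x)) x)"
  using power_mono[OF below[of x]] c by (simp add: cinner_gram[OF T] power_mult_distrib)

text \<open>A bounded-below operator has the bounded left inverse \<open>(T\<^sup>*T)\<^sup>-\<^sup>1 T\<^sup>*\<close>.\<close>

lemma left_invertibleI_bounded_below:
  fixes T :: "'a::chilbert_space \<Rightarrow> 'a"
  assumes T: "bounded_clinear T" and below: "\<And>x. c * norm x \<le> norm (T x)" and c: "c > 0"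
  shows "left_invertible T"
proof -
  have "c\<^sup>2 > 0" using c by simp
  note gram = bounded_clinear_gram[OF T] selfadj_gram[OF T] this gram_coercive[OF T below c]
  have "bounded_clinear (\<lambda>x. inv (\<lambda>x. adj T (T x)) (adj T x))"
    by (rule bounded_clinear_compose[OF bounded_clinear_coercive_inv[OF gram] bounded_clinear_adj[OF T]])
  moreover have "inv (\<lambda>x. adj T (T x)) (adj T (T x)) = x" for x
    by (rule coercive_inv_cancel(2)[OF gram])
  ultimately show ?thesis
    unfolding left_invertible_def by (intro exI[of _ "\<lambda>x. inv (\<lambda>x. adj T (T x)) (adj T x)"]) auto
qed

locale left_invertible_op =
  fixes T :: "'a::chilbert_space \<Rightarrow> 'a"
  assumes bounded: "bounded_clinear T" and left_invertible: "left_invertible T"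
begin

abbreviation gram_inv :: "'a \<Rightarrow> 'a" where "gram_inv \<equiv> inv (\<lambda>x. adj T (T x))"

lemma
  shows gram_gram_inv: "adj T (T (gram_inv x)) = x"
    and gram_inv_gram: "gram_inv (adj T (T x)) = x"
    and bounded_clinear_gram_inv: "bounded_clinear gram_inv"
    and selfadj_gram_inv: "selfadj gram_inv"
proof -
  obtain c where c: "c > 0" "\<And>x. c * norm x \<le> norm (T x)"
    using left_invertible_imp_bounded_below[OF left_invertible] by blast
  then have "c\<^sup>2 > 0" by simp
  note gram = bounded_clinear_gram[OF bounded] selfadj_gram[OF bounded] this gram_coercive[OF bounded c(2,1)]
  show "adj T (T (gram_inv x)) = x" "gram_inv (adj T (T x)) = x"
    using coercive_inv_cancel[OF gram] by simp_all
  show "bounded_clinear gram_inv" "selfadj gram_inv"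
    by (rule bounded_clinear_coercive_inv[OF gram] selfadj_coercive_inv[OF gram])+
qed

lemma cauchy_dual_apply: "cauchy_dual T x = T (gram_inv x)"
  by (simp add: cauchy_dual_def comp_def)

lemma bounded_clinear_cauchy_dual: "bounded_clinear (cauchy_dual T)"
  unfolding cauchy_dual_apply[abs_def] by (rule bounded_clinear_compose[OF bounded bounded_clinear_gram_inv])

lemma adj_cauchy_dual: "adj (cauchy_dual T) x = gram_inv (adj T x)"
proof -
  have "cinner (cauchy_dual T x) y = cinner x (gram_inv (adj T y))" for x y
    using selfadj_gram_inv by (simp add: cauchy_dual_apply cinner_adj_right[OF bounded] selfadj_def)
  then show ?thesis by (simp add: adj_eqI)
qed

lemma gram_cauchy_dual: "adj (cauchy_dual T) (cauchy_dual T x) = gram_inv x"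
  by (simp add: adj_cauchy_dual cauchy_dual_apply gram_gram_inv)

lemma adj_cauchy_dual_left_inverse: "adj (cauchy_dual T) (T x) = x"
  by (simp add: adj_cauchy_dual gram_inv_gram)

lemma left_invertible_cauchy_dual: "left_invertible (cauchy_dual T)"
  unfolding left_invertible_def
  by (intro exI[of _ "adj T"]) (simp add: bounded_clinear_adj[OF bounded] fun_eq_iff cauchy_dual_apply gram_gram_inv)

lemma cauchy_dual_cauchy_dual: "cauchy_dual (cauchy_dual T) = T"
proof -
  have "adj (cauchy_dual T) \<circ> cauchy_dual T = gram_inv" by (simp add: fun_eq_iff gram_cauchy_dual)
  moreover have "inv gram_inv = (\<lambda>x. adj T (T x))"
    by (rule inv_equality) (simp_all add: gram_gram_inv gram_inv_gram)
  ultimately show ?thesis by (simp add: cauchy_dual_def comp_def cauchy_dual_apply gram_inv_gram)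
qed

lemma expansive_iff_contraction_cauchy_dual:
  "(\<forall>x. norm x \<le> norm (T x)) \<longleftrightarrow> (\<forall>x. norm (cauchy_dual T x) \<le> norm x)"
proof
  assume expansive: "\<forall>x. norm x \<le> norm (T x)"
  show "\<forall>x. norm (cauchy_dual T x) \<le> norm x"
  proof
    fix x
    note gram = bounded_clinear_gram[OF bounded] selfadj_gram[OF bounded] zero_less_one
    have "1 * (norm y)\<^sup>2 \<le> Re (cinner (adj T (T y)) y)" for y
      using expansive by (simp add: cinner_gram[OF bounded] power_mono)
    note norm_gram_inv = norm_coercive_inv_le[OF gram this]
    have "(norm (cauchy_dual T x))\<^sup>2 = Re (cinner (gram_inv x) x)"
      using cinner_gram[OF bounded_clinear_cauchy_dual, of x] by (simp add: gram_cauchy_dual)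
    also have "\<dots> \<le> norm x * norm x"
      using Re_cinner_le_norm[of "gram_inv x" x] mult_right_mono[OF norm_gram_inv[of x] norm_ge_zero[of x]]
      by simp
    finally show "norm (cauchy_dual T x) \<le> norm x"
      by (simp add: norm_le_iff_power2_le power2_eq_square)
  qed
next
  assume "\<forall>x. norm (cauchy_dual T x) \<le> norm x"
  then show "\<forall>x. norm x \<le> norm (T x)"
    using norm_adj_le_contraction[OF bounded_clinear_cauchy_dual] by (metis adj_cauchy_dual_left_inverse)
qed

lemma Delta_gram_inv: "Delta T (gram_inv x) = gram_inv (Delta T x)"
  by (simp add: Delta_def gram_gram_inv gram_inv_gram clinear_diff[OF bounded_clinear_gram_inv])

lemma defect_sq_cauchy_dual: "defect_sq (cauchy_dual T) x = gram_inv (Delta T x)"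
  by (simp add: gram_cauchy_dual Delta_def gram_inv_gram clinear_diff[OF bounded_clinear_gram_inv])

lemma ker_perp_defect_sq_cauchy_dual: "ker_perp (defect_sq (cauchy_dual T)) = ker_perp (Delta T)"
proof -
  have "gram_inv y = 0 \<longleftrightarrow> y = 0" for y
    by (metis gram_gram_inv clinear_zero[OF bounded_clinear_gram_inv] clinear_zero[OF bounded_clinear_gram[OF bounded]])
  then show ?thesis by (simp add: ker_perp_def defect_sq_cauchy_dual)
qed

lemma gram_inv_in_ker_perp: "v \<in> ker_perp (Delta T) \<Longrightarrow> gram_inv v \<in> ker_perp (Delta T)"
  unfolding ker_perp_def
proof safe
  fix z assume v: "\<forall>z. Delta T z = 0 \<longrightarrow> cinner z v = 0" and "Delta T z = 0"
  then have "Delta T (gram_inv z) = 0" by (simp add: Delta_gram_inv clinear_zero[OF bounded_clinear_gram_inv])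
  then have "cinner (gram_inv z) v = 0" using v by blast
  then show "cinner z (gram_inv v) = 0" using selfadj_gram_inv by (simp add: selfadj_def)
qed

lemma gram_in_ker_perp:
  assumes v: "v \<in> ker_perp (Delta T)"
  shows "adj T (T v) \<in> ker_perp (Delta T)"
proof -
  have "cinner z (Delta T v) = 0" if "Delta T z = 0" for z
    using selfadj_Delta[OF bounded] that by (metis cinner_zero_left selfadj_def)
  then have "Delta T v \<in> ker_perp (Delta T)" by (simp add: ker_perp_def)
  then have "v + Delta T v \<in> ker_perp (Delta T)"
    using v csubspace_ker_perp by (auto simp: csubspace_def)
  then show ?thesis by (simp add: Delta_def)
qed

text \<open>Substituting \<open>h = T\<^sup>*T v\<close>, which preserves the defect space, turns \<open>T' h\<close> into \<open>T v\<close>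
  and \<open>T'\<^sup>*T' h\<close> into \<open>v\<close>.\<close>

lemma compression_cauchy_dual_iff:
  "(\<forall>h\<in>ker_perp (Delta T).
      norm (orth_proj (ker_perp (Delta T)) (cauchy_dual T h)) \<le> norm (adj (cauchy_dual T) (cauchy_dual T h)))
   \<longleftrightarrow> (\<forall>v\<in>ker_perp (Delta T). norm (orth_proj (ker_perp (Delta T)) (T v)) \<le> norm v)"
  using gram_inv_in_ker_perp gram_in_ker_perp
  by (metis cauchy_dual_apply gram_cauchy_dual gram_inv_gram)

lemma regular_Delta_iff_regular_defect_cauchy_dual:
  assumes expansive: "\<And>x. norm x \<le> norm (T x)"
  shows "regular_op (Delta T) T \<longleftrightarrow> regular_op (defect_sq (cauchy_dual T)) (cauchy_dual T)"
proof -
  let ?C = "cauchy_dual T" and ?E = "defect_sq (cauchy_dual T)"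
  have contraction: "norm (?C x) \<le> norm x" for x
    using expansive expansive_iff_contraction_cauchy_dual by blast
  note Delta = bounded_clinear_Delta[OF bounded] positive_op_Delta[OF bounded expansive]
  note E = bounded_clinear_defect_sq[OF bounded_clinear_cauchy_dual]
    positive_op_defect_sq[OF bounded_clinear_cauchy_dual contraction]
  have E_eq: "?E x = gram_inv (Delta T x)" for x by (rule defect_sq_cauchy_dual)
  have gram_eq: "adj T (T x) = x + 1 *\<^sub>R Delta T x" for x by (simp add: Delta_def)
  have gram_inv_eq: "gram_inv x = x + (-1) *\<^sub>R ?E x" for x by (simp add: gram_cauchy_dual)
  have "(\<forall>x. Delta T (Delta T (T x)) = Delta T (T (Delta T x)))
    \<longleftrightarrow> (\<forall>x. ?E (?E (?C x)) = ?E (?C (?E x)))"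
  proof
    assume "\<forall>x. Delta T (Delta T (T x)) = Delta T (T (Delta T x))"
    then have "gram_inv (Delta T (gram_inv (Delta T (T (gram_inv x)))))
        = gram_inv (Delta T (T (gram_inv (gram_inv (Delta T x)))))" for x
      by (intro regular_transfer_inverse[OF bounded Delta(1) bounded_clinear_gram_inv gram_inv_gram
            gram_gram_inv gram_eq]) blast
    then show "\<forall>x. ?E (?E (?C x)) = ?E (?C (?E x))"
      by (simp only: E_eq) (simp add: cauchy_dual_apply)
  next
    assume "\<forall>x. ?E (?E (?C x)) = ?E (?C (?E x))"
    then have "adj T (T (?E (adj T (T (?E (?C (adj T (T x))))))))
        = adj T (T (?E (?C (adj T (T (adj T (T (?E x))))))))" for x
      by (intro regular_transfer_inverse[OF bounded_clinear_cauchy_dual E(1) bounded_clinear_gram[OF bounded]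
            gram_gram_inv gram_inv_gram gram_inv_eq]) blast
    then show "\<forall>x. Delta T (Delta T (T x)) = Delta T (T (Delta T x))"
      by (simp only: E_eq) (simp add: cauchy_dual_apply gram_gram_inv gram_inv_gram)
  qed
  then show ?thesis
    by (simp add: regular_op_iff[OF Delta bounded] regular_op_iff[OF E bounded_clinear_cauchy_dual])
qed

end

lemma cauchy_dual_cauchy_dual:
  "bounded_clinear T \<Longrightarrow> left_invertible T \<Longrightarrow> cauchy_dual (cauchy_dual T) = T"
  by (simp add: left_invertible_op.cauchy_dual_cauchy_dual left_invertible_op.intro)

lemma concave_op_imp_left_invertible:
  fixes T :: "'a::chilbert_space \<Rightarrow> 'a"
  assumes "bounded_clinear T" "concave_op T"
  shows "left_invertible T"
  by (rule left_invertibleI_bounded_below[OF assms(1), of 1]) (simp_all add: concave_op_imp_expansive[OF assms])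

lemma cauchy_dual_of_concave:
  fixes T :: "'a::chilbert_space \<Rightarrow> 'a"
  assumes T: "bounded_clinear T" and concave: "concave_op T" and regular: "regular_op (Delta T) T"
  defines "C \<equiv> cauchy_dual T"
  shows "bounded_clinear C \<and> left_invertible C \<and> hypercontraction2 C \<and>
    (defect_op C \<circ> defect_op C) \<circ> C = defect_op C \<circ> C \<circ> defect_op C \<and>
    (\<forall>h \<in> closure (range (defect_op C)).
       norm (orth_proj (closure (range (defect_op C))) (C h)) \<le> norm (adj C (C h)))"
proof -
  have expansive: "norm x \<le> norm (T x)" for x by (rule concave_op_imp_expansive[OF T concave])
  interpret left_invertible_op T
    using T concave_op_imp_left_invertible[OF T concave] by unfold_locales
  have C: "bounded_clinear C" "left_invertible C"
    by (simp_all add: C_def bounded_clinear_cauchy_dual left_invertible_cauchy_dual)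
  have contraction: "norm (C x) \<le> norm x" for x
    using expansive expansive_iff_contraction_cauchy_dual by (simp add: C_def)
  note E = bounded_clinear_defect_sq[OF C(1)] positive_op_defect_sq[OF C(1) contraction]
  have regular_C: "regular_op (defect_sq C) C"
    using regular regular_Delta_iff_regular_defect_cauchy_dual expansive by (simp add: C_def)
  have defect_space: "closure (range (defect_op C)) = ker_perp (Delta T)"
    unfolding defect_op_def closure_range_op_sqrt[OF E] by (simp add: C_def ker_perp_defect_sq_cauchy_dual)
  have compression_C: "\<forall>h \<in> ker_perp (Delta T). norm (orth_proj (ker_perp (Delta T)) (C h)) \<le> norm (adj C (C h))"
    using concave_op_iff_compression[OF T expansive regular] concave compression_cauchy_dual_iff
    by (simp add: C_def)
  have "norm (adj C (C h)) \<le> norm h" for h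
    using norm_adj_le_contraction[OF C(1) contraction] contraction order_trans by blast
  then have "hypercontraction2 C"
    using compression_C hypercontraction2_iff_compression[OF C(1) contraction regular_C]
    by (metis defect_space C_def ker_perp_defect_sq_cauchy_dual order_trans)
  moreover have "(defect_op C \<circ> defect_op C) \<circ> C = defect_op C \<circ> C \<circ> defect_op C"
    using regular_C regular_op_iff_op_sqrt[OF E] by (simp add: defect_op_def)
  ultimately show ?thesis using C compression_C by (simp add: defect_space)
qed

lemma cauchy_dual_of_hypercontraction:
  fixes C :: "'a::chilbert_space \<Rightarrow> 'a"
  assumes C: "bounded_clinear C" "left_invertible C" and hyper: "hypercontraction2 C"
    and regular: "(defect_op C \<circ> defect_op C) \<circ> C = defect_op C \<circ> C \<circ> defect_op C"
    and compression: "\<forall>h \<in> closure (range (defect_op C)).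
       norm (orth_proj (closure (range (defect_op C))) (C h)) \<le> norm (adj C (C h))"
  defines "T \<equiv> cauchy_dual C"
  shows "bounded_clinear T \<and> concave_op T \<and> regular_op (Delta T) T"
proof -
  interpret C: left_invertible_op C using C by unfold_locales
  interpret left_invertible_op T
    unfolding T_def using C.bounded_clinear_cauchy_dual C.left_invertible_cauchy_dual by unfold_locales
  have dual: "cauchy_dual T = C" by (simp add: T_def C.cauchy_dual_cauchy_dual)
  have contraction: "norm (C x) \<le> norm x" for x using hypercontraction2_iff[OF C(1)] hyper by blast
  then have expansive: "norm x \<le> norm (T x)" for x
    using expansive_iff_contraction_cauchy_dual by (simp add: dual)
  note E = bounded_clinear_defect_sq[OF C(1)] positive_op_defect_sq[OF C(1) contraction]
  have "regular_op (Delta T) T"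
    using regular regular_op_iff_op_sqrt[OF E] regular_Delta_iff_regular_defect_cauchy_dual[OF expansive]
    by (simp add: defect_op_def dual)
  moreover have "closure (range (defect_op C)) = ker_perp (Delta T)"
    using ker_perp_defect_sq_cauchy_dual by (simp add: defect_op_def closure_range_op_sqrt[OF E] dual)
  ultimately show ?thesis
    using compression compression_cauchy_dual_iff concave_op_iff_compression[OF bounded expansive]
    by (simp add: dual bounded)
qed

theorem theorem3p1:
  fixes dummy :: "'a::chilbert_space"
  shows "bij_betw (cauchy_dual :: ('a \<Rightarrow> 'a) \<Rightarrow> ('a \<Rightarrow> 'a))
     {T. bounded_clinear T \<and> concave_op T \<and> regular_op (Delta T) T}
     {C. bounded_clinear C \<and> left_invertible C \<and> hypercontraction2 C \<and>
         (defect_op C \<circ> defect_op C) \<circ> C = defect_op C \<circ> C \<circ> defect_op C \<and>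
         (\<forall>h \<in> closure (range (defect_op C)).
            norm (orth_proj (closure (range (defect_op C))) (C h)) \<le> norm (adj C (C h)))}"
proof (rule bij_betw_byWitness[where f' = cauchy_dual], goal_cases)
  case 1
  show ?case using cauchy_dual_cauchy_dual concave_op_imp_left_invertible by blast
next
  case 2
  show ?case using cauchy_dual_cauchy_dual by blast
next
  case 3
  show ?case by (intro image_subsetI) (simp add: cauchy_dual_of_concave)
next
  case 4
  show ?case by (intro image_subsetI) (simp add: cauchy_dual_of_hypercontraction)
qed

end
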